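(* Let $A=(a,b,c,d)$ with $a,b,c,d\in\mathbb{R}$, $ad-bc=1$, $b\neq 0$, let $d'\in\mathbb{R}$ be arbitrary and set $A_1=(0,b,-\tfrac1b,d')$. Let $f,g\in L^2(\mathbb{R})$. Then for all $(t,u)\in\mathbb{R}^2$, $$S^{A}_{g}f(t,u)=\int_{-\infty}^{+\infty}L_A^{f}(\xi)\,G^{*}(\xi\mid u,t)\,d\xi,$$ where $$G^{*}(\xi\mid u,t)=\sqrt{-i2\pi b}\;e^{i\frac{d'}{2b}(\xi-u)^2}\,\overline{L_{A_1}^{g}(\xi-u)}\;K_A(t,u)\,\overline{K_A(t,\xi)} .$$
   Context: For a real matrix parameter $M=(a,b,c,d)$ with $ad-bc=1$ and $b\neq0$, the linear canonical transform (LCT) of $h\in L^2(\mathbb{R})$ is $L_M^{h}(u)=\int_{-\infty}^{+\infty}h(t)K_M(t,u)\,dt$ with kernel $K_M(t,u)=\frac{1}{\sqrt{i2\pi b}}\exp\!\big(i\frac{a}{2b}t^2-i\frac{1}{b}tu+i\frac{d}{2b}u^2\big)$ (principal branch of the square root; extended to $L^2$ by unitarity). The inverse is $h(t)=\int L_M^h(u)K_{M^{-1}}(u,t)\,du$ with $M^{-1}=(d,-b,-c,a)$ and $K_{M^{-1}}(u,t)=\overline{K_M(t,u)}$. For a window $g\in L^2(\mathbb{R})$, the short-time linear canonical transform (STLCT) of $f\in L^2(\mathbb{R})$ is $S^{A}_{g}f(t,u)=\int_{-\infty}^{+\infty}f(\tau)\overline{g(\tau-t)}K_A(\tau,u)\,d\tau$.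 A bar or superscript $*$ denotes complex conjugation. *)

theory Defs
  imports "HOL-Analysis.Analysis"
begin

text \<open>A real parameter matrix M = (a,b,c,d) is represented as a 4-tuple.\<close>
type_synonym lct_param = "real \<times> real \<times> real \<times> real"

definition sq_integrable :: "(real \<Rightarrow> complex) \<Rightarrow> bool" where
  "sq_integrable h \<longleftrightarrow> h \<in> borel_measurable lborel \<and>
     integrable lborel (\<lambda>x. (cmod (h x))\<^sup>2)"

definition lct_kernel :: "lct_param \<Rightarrow> real \<Rightarrow> real \<Rightarrow> complex" where
  "lct_kernel M t u = (case M of (a, b, c, d) \<Rightarrow>
     (1 / csqrt (\<i> * 2 * complex_of_real pi * complex_of_real b)) *
     exp (\<i> * complex_of_real (a / (2 * b) * t\<^sup>2 - (1 / b) * t * u + d / (2 * b) * u\<^sup>2)))"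

text \<open>Truncated LCT integral over [-N,N] (absolutely convergent for h in L^2).\<close>
definition lct_trunc :: "lct_param \<Rightarrow> (real \<Rightarrow> complex) \<Rightarrow> nat \<Rightarrow> real \<Rightarrow> complex" where
  "lct_trunc M h N u = (LINT t:{- real N..real N}|lborel. h t * lct_kernel M t u)"

text \<open>F is (a representative of) the LCT L_M^h of h in L^2: the L^2 extension of the
  integral transform, obtained as the L^2 limit of the truncated integrals.\<close>
definition is_LCT :: "lct_param \<Rightarrow> (real \<Rightarrow> complex) \<Rightarrow> (real \<Rightarrow> complex) \<Rightarrow> bool" where
  "is_LCT M h F \<longleftrightarrow> sq_integrable F \<and>
     ((\<lambda>N. \<integral>\<^sup>+ u. ennreal ((cmod (lct_trunc M h N u - F u))\<^sup>2) \<partial>lborel) \<longlonglongrightarrow> 0)"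

definition stlct :: "lct_param \<Rightarrow> (real \<Rightarrow> complex) \<Rightarrow> (real \<Rightarrow> complex) \<Rightarrow> real \<Rightarrow> real \<Rightarrow> complex" where
  "stlct A g f t u = (LINT \<tau>|lborel. f \<tau> * cnj (g (\<tau> - t)) * lct_kernel A \<tau> u)"

end

theory Submission
  imports Defs "HOL-Probability.Probability"
begin

text \<open>
  The STLCT at \<open>(t, u)\<close> is the \<open>L\<^sup>2\<close> inner product of \<open>f\<close> with the window
  \<open>h(\<tau>) = g(\<tau> - t) \<cdot> conj K\<^sub>A(\<tau>, u)\<close>. For the truncations of \<open>f\<close> and \<open>g\<close> to
  \<open>[-N, N]\<close>, which lie in \<open>L\<^sup>1 \<inter> L\<^sup>2\<close>, Parseval's identity for the LCT turns this inner
  product into the inner product of the transforms. Parseval for the LCT reduces to Parseval for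
  the Fourier transform, which is proved by damping with a Gaussian and using that the
  correlation \<open>z \<mapsto> \<integral> f(x) conj g(x - z) dx\<close> is continuous, i.e. that translation is
  continuous in \<open>L\<^sup>2\<close>. Completing the square shows that the transform of the truncated
  window is \<open>conj G\<^sup>*\<close>, built from \<open>L\<^sub>A\<^sub>1\<close> of the truncated \<open>g\<close>. As \<open>N \<rightarrow> \<infinity>\<close> the
  transformed truncations converge in \<open>L\<^sup>2\<close> to \<open>L\<^sub>A\<^sup>f\<close> and \<open>L\<^sub>A\<^sub>1\<^sup>g\<close>, so both inner
  products converge, the first by dominated convergence.
\<close>

section \<open>Square-integrable functions\<close>

lemma borel_measurable_cnj [measurable]: "(cnj :: complex \<Rightarrow> complex) \<in> borel_measurable borel"
  by (intro borel_measurable_continuous_onI continuous_on_cnj continuous_on_id)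

lemma borel_measurable_cis [measurable]: "cis \<in> borel_measurable borel"
  by (intro borel_measurable_continuous_onI continuous_on_cis continuous_on_id)

definition L2_sqnorm :: "(real \<Rightarrow> complex) \<Rightarrow> real" where
  "L2_sqnorm u = (LINT x|lborel. (cmod (u x))\<^sup>2)"

lemma sq_integrable_borel_measurable: "sq_integrable u \<Longrightarrow> u \<in> borel_measurable borel"
  by (simp add: sq_integrable_def)

lemma L2_sqnorm_nonneg: "L2_sqnorm u \<ge> 0"
  unfolding L2_sqnorm_def by (rule integral_nonneg_AE) auto

lemma L2_sqnorm_eq_nn_integral:
  "sq_integrable u \<Longrightarrow> (\<integral>\<^sup>+x. ennreal ((cmod (u x))\<^sup>2) \<partial>lborel) = ennreal (L2_sqnorm u)"
  unfolding L2_sqnorm_def by (intro nn_integral_eq_integral) (auto simp: sq_integrable_def)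

lemma L2_sqnorm_le_integral:
  assumes "integrable lborel g" "\<And>x. (cmod (u x))\<^sup>2 \<le> g x" "u \<in> borel_measurable borel"
  shows "L2_sqnorm u \<le> (LINT x|lborel. g x)"
proof -
  have [measurable]: "u \<in> borel_measurable borel" by fact
  have "integrable lborel (\<lambda>x. (cmod (u x))\<^sup>2)"
    by (rule Bochner_Integration.integrable_bound[OF assms(1)])
       (use assms(2) in \<open>auto intro!: AE_I2 intro: order_trans[OF _ abs_ge_self]\<close>)
  then show ?thesis unfolding L2_sqnorm_def using assms by (intro integral_mono) auto
qed

lemma L2_sqnorm_mult_const_norm:
  assumes "\<And>x. cmod (m x) = \<kappa>"
  shows "L2_sqnorm (\<lambda>x. m x * u x) = \<kappa>\<^sup>2 * L2_sqnorm u"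
  unfolding L2_sqnorm_def by (simp add: norm_mult power_mult_distrib assms)

lemma L2_sqnorm_cmult: "L2_sqnorm (\<lambda>x. c * u x) = (cmod c)\<^sup>2 * L2_sqnorm u"
  by (rule L2_sqnorm_mult_const_norm) simp

lemma L2_sqnorm_minus_commute: "L2_sqnorm (\<lambda>x. u x - v x) = L2_sqnorm (\<lambda>x. v x - u x)"
  unfolding L2_sqnorm_def by (simp add: norm_minus_commute)

lemma integrable_mult_cnj_sq_integrable:
  assumes "sq_integrable u" "sq_integrable v"
  shows "integrable lborel (\<lambda>x. u x * cnj (v x))"
proof (rule Bochner_Integration.integrable_bound)
  show "integrable lborel (\<lambda>x. (cmod (u x))\<^sup>2 + (cmod (v x))\<^sup>2)"
    using assms by (auto simp: sq_integrable_def)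
  have [measurable]: "u \<in> borel_measurable borel" "v \<in> borel_measurable borel"
    using assms by (auto simp: sq_integrable_borel_measurable)
  show "(\<lambda>x. u x * cnj (v x)) \<in> borel_measurable lborel" by measurable
  have "cmod (u x) * cmod (v x) \<le> (cmod (u x))\<^sup>2 + (cmod (v x))\<^sup>2" for x
    using sum_squares_bound[of "cmod (u x)" "cmod (v x)"]
      mult_nonneg_nonneg[OF norm_ge_zero norm_ge_zero, of "u x" "v x"] by linarith
  then show "AE x in lborel. norm (u x * cnj (v x)) \<le> norm ((cmod (u x))\<^sup>2 + (cmod (v x))\<^sup>2)"
    by (intro AE_I2) (simp add: norm_mult)
qed

lemma integrable_norm_mult_sq_integrable:
  assumes "sq_integrable u" "sq_integrable v"
  shows "integrable lborel (\<lambda>x. cmod (u x) * cmod (v x))"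
  using integrable_norm[OF integrable_mult_cnj_sq_integrable[OF assms]] by (simp add: norm_mult)

lemma Cauchy_Schwarz_L2_norm:
  assumes "sq_integrable u" "sq_integrable v"
  shows "(LINT x|lborel. cmod (u x) * cmod (v x))\<^sup>2 \<le> L2_sqnorm u * L2_sqnorm v"
proof -
  have [measurable]: "u \<in> borel_measurable borel" "v \<in> borel_measurable borel"
    using assms by (auto simp: sq_integrable_borel_measurable)
  have nn_sq: "(\<integral>\<^sup>+x. ennreal (cmod (w x)) ^ 2 \<partial>lborel) = ennreal (L2_sqnorm w)"
    if "sq_integrable w" for w
    using L2_sqnorm_eq_nn_integral[OF that] by (simp add: ennreal_power)
  have "(\<integral>\<^sup>+x. ennreal (cmod (u x)) * ennreal (cmod (v x)) \<partial>lborel)\<^sup>2 \<le>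
     (\<integral>\<^sup>+x. ennreal (cmod (u x)) ^ 2 \<partial>lborel) * (\<integral>\<^sup>+x. ennreal (cmod (v x)) ^ 2 \<partial>lborel)"
    by (rule Cauchy_Schwarz_nn_integral) auto
  also have "(\<integral>\<^sup>+x. ennreal (cmod (u x)) * ennreal (cmod (v x)) \<partial>lborel)
      = ennreal (LINT x|lborel. cmod (u x) * cmod (v x))"
    using integrable_norm_mult_sq_integrable[OF assms]
    by (subst nn_integral_eq_integral[symmetric]) (auto simp: ennreal_mult)
  finally have "ennreal (LINT x|lborel. cmod (u x) * cmod (v x)) ^ 2 \<le> ennreal (L2_sqnorm u) * ennreal (L2_sqnorm v)"
    using nn_sq assms by simp
  moreover have "(LINT x|lborel. cmod (u x) * cmod (v x)) \<ge> 0" by (rule integral_nonneg_AE) auto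
  ultimately have "ennreal ((LINT x|lborel. cmod (u x) * cmod (v x)) ^ 2) \<le> ennreal (L2_sqnorm u * L2_sqnorm v)"
    using L2_sqnorm_nonneg[of u] L2_sqnorm_nonneg[of v] by (simp only: ennreal_power ennreal_mult)
  then show ?thesis
    using L2_sqnorm_nonneg[of u] L2_sqnorm_nonneg[of v] by (simp add: ennreal_le_iff)
qed

lemma Cauchy_Schwarz_L2:
  assumes "sq_integrable u" "sq_integrable v"
  shows "(cmod (LINT x|lborel. u x * cnj (v x)))\<^sup>2 \<le> L2_sqnorm u * L2_sqnorm v"
proof -
  have "cmod (LINT x|lborel. u x * cnj (v x)) \<le> (LINT x|lborel. cmod (u x) * cmod (v x))"
    using integral_norm_bound[of lborel "\<lambda>x. u x * cnj (v x)"] by (simp add: norm_mult)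
  then have "(cmod (LINT x|lborel. u x * cnj (v x)))\<^sup>2 \<le> (LINT x|lborel. cmod (u x) * cmod (v x))\<^sup>2"
    by (intro power_mono) auto
  with Cauchy_Schwarz_L2_norm[OF assms] show ?thesis by linarith
qed

lemma cmod_add_sq_le: "(cmod (a + b))\<^sup>2 \<le> 2 * (cmod a)\<^sup>2 + 2 * (cmod b)\<^sup>2"
proof -
  have "(cmod (a + b))\<^sup>2 \<le> (cmod a + cmod b)\<^sup>2" by (intro power_mono norm_triangle_ineq) auto
  also have "\<dots> \<le> 2 * (cmod a)\<^sup>2 + 2 * (cmod b)\<^sup>2"
    using sum_squares_bound[of "cmod a" "cmod b"] by (simp add: power2_eq_square algebra_simps)
  finally show ?thesis .
qed

lemma sq_integrable_add:
  assumes "sq_integrable u" "sq_integrable v"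
  shows "sq_integrable (\<lambda>x. u x + v x)"
  unfolding sq_integrable_def
proof
  have [measurable]: "u \<in> borel_measurable borel" "v \<in> borel_measurable borel"
    using assms by (auto simp: sq_integrable_borel_measurable)
  show "(\<lambda>x. u x + v x) \<in> borel_measurable lborel" by measurable
  show "integrable lborel (\<lambda>x. (cmod (u x + v x))\<^sup>2)"
  proof (rule Bochner_Integration.integrable_bound)
    show "integrable lborel (\<lambda>x. 2 * (cmod (u x))\<^sup>2 + 2 * (cmod (v x))\<^sup>2)"
      using assms by (auto simp: sq_integrable_def)
  qed (use cmod_add_sq_le in auto)
qed

lemma sq_integrable_bounded_mult:
  assumes "sq_integrable u" "m \<in> borel_measurable borel" "\<And>x. cmod (m x) \<le> B"
  shows "sq_integrable (\<lambda>x. m x * u x)"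
  unfolding sq_integrable_def
proof
  have [measurable]: "u \<in> borel_measurable borel" "m \<in> borel_measurable borel"
    using assms by (auto simp: sq_integrable_borel_measurable)
  show "(\<lambda>x. m x * u x) \<in> borel_measurable lborel" by measurable
  show "integrable lborel (\<lambda>x. (cmod (m x * u x))\<^sup>2)"
  proof (rule Bochner_Integration.integrable_bound)
    show "integrable lborel (\<lambda>x. B\<^sup>2 * (cmod (u x))\<^sup>2)"
      using assms by (auto simp: sq_integrable_def)
    have "(cmod (m x) * cmod (u x))\<^sup>2 \<le> (B * cmod (u x))\<^sup>2" for x
      using assms(3)[of x] by (intro power_mono mult_right_mono) auto
    then show "AE x in lborel. norm ((cmod (m x * u x))\<^sup>2) \<le> norm (B\<^sup>2 * (cmod (u x))\<^sup>2)"
      by (intro AE_I2) (simp add: norm_mult power_mult_distrib)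
  qed simp
qed

lemma sq_integrable_cmult: "sq_integrable u \<Longrightarrow> sq_integrable (\<lambda>x. c * u x)"
  using sq_integrable_bounded_mult[of u "\<lambda>_. c" "cmod c"] by auto

lemma sq_integrable_diff:
  "sq_integrable u \<Longrightarrow> sq_integrable v \<Longrightarrow> sq_integrable (\<lambda>x. u x - v x)"
  using sq_integrable_add[of u "\<lambda>x. - v x"] sq_integrable_cmult[of v "-1"] by simp

lemma sq_integrable_zero: "sq_integrable (\<lambda>x. 0)"
  by (simp add: sq_integrable_def)

lemma L2_sqnorm_add_le:
  assumes "sq_integrable u" "sq_integrable v"
  shows "L2_sqnorm (\<lambda>x. u x + v x) \<le> 2 * L2_sqnorm u + 2 * L2_sqnorm v"
proof -
  have [measurable]: "u \<in> borel_measurable borel" "v \<in> borel_measurable borel"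
    using assms by (auto simp: sq_integrable_borel_measurable)
  have "L2_sqnorm (\<lambda>x. u x + v x) \<le> (LINT x|lborel. 2 * (cmod (u x))\<^sup>2 + 2 * (cmod (v x))\<^sup>2)"
    by (rule L2_sqnorm_le_integral) (use assms cmod_add_sq_le in \<open>auto simp: sq_integrable_def\<close>)
  also have "\<dots> = 2 * L2_sqnorm u + 2 * L2_sqnorm v"
    using assms unfolding L2_sqnorm_def by (simp add: sq_integrable_def)
  finally show ?thesis .
qed

lemma lborel_integral_shift:
  fixes f :: "real \<Rightarrow> 'a::{banach, second_countable_topology}"
  shows "(LINT x|lborel. f (x + z)) = (LINT x|lborel. f x)"
  using lborel_integral_real_affine[of 1 f z] by (simp add: add.commute)

lemma lborel_integrable_shift_iff:
  fixes f :: "real \<Rightarrow> 'a::{banach, second_countable_topology}"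
  shows "integrable lborel (\<lambda>x. f (x + z)) \<longleftrightarrow> integrable lborel f"
  using lborel_integrable_real_affine_iff[of 1 f z] by (simp add: add.commute)

lemma sq_integrable_shift: "sq_integrable u \<Longrightarrow> sq_integrable (\<lambda>x. u (x + z))"
  unfolding sq_integrable_def
proof (elim conjE, intro conjI)
  assume [measurable]: "u \<in> borel_measurable lborel" and "integrable lborel (\<lambda>x. (cmod (u x))\<^sup>2)"
  then show "integrable lborel (\<lambda>x. (cmod (u (x + z)))\<^sup>2)"
    using lborel_integrable_shift_iff[of "\<lambda>x. (cmod (u x))\<^sup>2" z] by simp
  show "(\<lambda>x. u (x + z)) \<in> borel_measurable lborel" by measurable
qed

lemma sq_integrable_shift': "sq_integrable u \<Longrightarrow> sq_integrable (\<lambda>x. u (x - z))"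
  using sq_integrable_shift[of u "- z"] by simp

lemma L2_sqnorm_shift: "L2_sqnorm (\<lambda>x. u (x + z)) = L2_sqnorm u"
  unfolding L2_sqnorm_def using lborel_integral_shift[of "\<lambda>x. (cmod (u x))\<^sup>2" z] by simp

lemma L2_sqnorm_shift': "L2_sqnorm (\<lambda>x. u (x - z)) = L2_sqnorm u"
  using L2_sqnorm_shift[of u "- z"] by simp

section \<open>Continuity of translation in \<open>L\<^sup>2\<close>\<close>

definition L2_shift_continuous :: "(real \<Rightarrow> complex) \<Rightarrow> bool" where
  "L2_shift_continuous u \<longleftrightarrow> sq_integrable u \<and>
     (\<forall>e>0. \<exists>d>0. \<forall>z. \<bar>z\<bar> < d \<longrightarrow> L2_sqnorm (\<lambda>x. u (x + z) - u x) \<le> e)"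

lemma L2_shift_continuous_zero: "L2_shift_continuous (\<lambda>x. 0)"
  unfolding L2_shift_continuous_def by (auto simp: sq_integrable_zero L2_sqnorm_def)

lemma L2_shift_continuous_add:
  assumes "L2_shift_continuous u" "L2_shift_continuous v"
  shows "L2_shift_continuous (\<lambda>x. u x + v x)"
  unfolding L2_shift_continuous_def
proof (intro conjI allI impI)
  have su: "sq_integrable u" and sv: "sq_integrable v"
    using assms by (auto simp: L2_shift_continuous_def)
  show "sq_integrable (\<lambda>x. u x + v x)" using su sv by (rule sq_integrable_add)
  fix e :: real assume e: "e > 0"
  obtain d1 where d1: "d1 > 0" "\<And>z. \<bar>z\<bar> < d1 \<Longrightarrow> L2_sqnorm (\<lambda>x. u (x + z) - u x) \<le> e/4"
    using assms(1) e unfolding L2_shift_continuous_def by (meson divide_pos_pos zero_less_numeral)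
  obtain d2 where d2: "d2 > 0" "\<And>z. \<bar>z\<bar> < d2 \<Longrightarrow> L2_sqnorm (\<lambda>x. v (x + z) - v x) \<le> e/4"
    using assms(2) e unfolding L2_shift_continuous_def by (meson divide_pos_pos zero_less_numeral)
  show "\<exists>d>0. \<forall>z. \<bar>z\<bar> < d \<longrightarrow> L2_sqnorm (\<lambda>x. u (x + z) + v (x + z) - (u x + v x)) \<le> e"
  proof (intro exI[of _ "min d1 d2"] conjI allI impI)
    fix z assume z: "\<bar>z\<bar> < min d1 d2"
    have "L2_sqnorm (\<lambda>x. u (x + z) + v (x + z) - (u x + v x))
        = L2_sqnorm (\<lambda>x. (u (x + z) - u x) + (v (x + z) - v x))" by (simp add: algebra_simps)
    also have "\<dots> \<le> 2 * L2_sqnorm (\<lambda>x. u (x + z) - u x) + 2 * L2_sqnorm (\<lambda>x. v (x + z) - v x)"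
      by (intro L2_sqnorm_add_le sq_integrable_diff sq_integrable_shift su sv)
    also have "\<dots> \<le> e" using d1(2)[of z] d2(2)[of z] z by simp
    finally show "L2_sqnorm (\<lambda>x. u (x + z) + v (x + z) - (u x + v x)) \<le> e" .
  qed (use d1 d2 in simp)
qed

lemma L2_shift_continuous_cmult:
  assumes "L2_shift_continuous u"
  shows "L2_shift_continuous (\<lambda>x. c * u x)"
proof (cases "c = 0")
  case True
  then show ?thesis using L2_shift_continuous_zero by simp
next
  case False
  then have c: "(cmod c)\<^sup>2 > 0" by simp
  have "sq_integrable (\<lambda>x. c * u x)"
    using assms sq_integrable_cmult[of u c] by (simp add: L2_shift_continuous_def)
  moreover have "\<exists>d>0. \<forall>z. \<bar>z\<bar> < d \<longrightarrow> L2_sqnorm (\<lambda>x. c * u (x + z) - c * u x) \<le> e" if "e > 0" for e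
  proof -
    have "e / (cmod c)\<^sup>2 > 0" using that c by simp
    then obtain d where d: "d > 0" "\<And>z. \<bar>z\<bar> < d \<Longrightarrow> L2_sqnorm (\<lambda>x. u (x + z) - u x) \<le> e / (cmod c)\<^sup>2"
      using assms unfolding L2_shift_continuous_def by blast
    have "L2_sqnorm (\<lambda>x. c * u (x + z) - c * u x) \<le> e" if "\<bar>z\<bar> < d" for z
    proof -
      have "(cmod c)\<^sup>2 * L2_sqnorm (\<lambda>x. u (x + z) - u x) \<le> (cmod c)\<^sup>2 * (e / (cmod c)\<^sup>2)"
        using d(2)[OF that] by (rule mult_left_mono) simp
      also have "\<dots> = e" using c by simp
      finally show ?thesis
        using L2_sqnorm_cmult[of c "\<lambda>x. u (x + z) - u x"] by (simp add: algebra_simps)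
    qed
    with d(1) show ?thesis by blast
  qed
  ultimately show ?thesis unfolding L2_shift_continuous_def by simp
qed

lemma L2_shift_continuous_approx:
  assumes u: "sq_integrable u"
    and approx: "\<And>e. e > 0 \<Longrightarrow> \<exists>v. L2_shift_continuous v \<and> L2_sqnorm (\<lambda>x. u x - v x) \<le> e"
  shows "L2_shift_continuous u"
  unfolding L2_shift_continuous_def
proof (intro conjI allI impI)
  show "sq_integrable u" by fact
  fix e :: real assume e: "e > 0"
  obtain v where v: "L2_shift_continuous v" "L2_sqnorm (\<lambda>x. u x - v x) \<le> e/12"
    using approx[of "e/12"] e by auto
  have sv: "sq_integrable v" using v by (auto simp: L2_shift_continuous_def)
  obtain d where d: "d > 0" "\<And>z. \<bar>z\<bar> < d \<Longrightarrow> L2_sqnorm (\<lambda>x. v (x + z) - v x) \<le> e/12"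
    using v(1) e unfolding L2_shift_continuous_def by (meson divide_pos_pos zero_less_numeral)
  show "\<exists>d>0. \<forall>z. \<bar>z\<bar> < d \<longrightarrow> L2_sqnorm (\<lambda>x. u (x + z) - u x) \<le> e"
  proof (intro exI[of _ d] conjI allI impI)
    fix z assume z: "\<bar>z\<bar> < d"
    define p where "p x = u (x + z) - v (x + z)" for x
    define q where "q x = v (x + z) - v x" for x
    define r where "r x = v x - u x" for x
    have p: "sq_integrable p" and q: "sq_integrable q" and r: "sq_integrable r"
      unfolding p_def q_def r_def by (intro sq_integrable_diff sq_integrable_shift u sv)+
    have "L2_sqnorm (\<lambda>x. u (x + z) - u x) = L2_sqnorm (\<lambda>x. p x + (q x + r x))"
      unfolding p_def q_def r_def by (simp add: algebra_simps)
    also have "\<dots> \<le> 2 * L2_sqnorm p + 2 * L2_sqnorm (\<lambda>x. q x + r x)"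
      by (intro L2_sqnorm_add_le p sq_integrable_add q r)
    also have "\<dots> \<le> 2 * L2_sqnorm p + 2 * (2 * L2_sqnorm q + 2 * L2_sqnorm r)"
      using L2_sqnorm_add_le[OF q r] by simp
    also have "\<dots> = 6 * L2_sqnorm (\<lambda>x. u x - v x) + 4 * L2_sqnorm (\<lambda>x. v (x + z) - v x)"
      using L2_sqnorm_shift[of "\<lambda>x. u x - v x" z] L2_sqnorm_minus_commute[of v u]
      unfolding p_def q_def r_def by simp
    also have "\<dots> \<le> e" using d(2)[OF z] v(2) e by linarith
    finally show "L2_sqnorm (\<lambda>x. u (x + z) - u x) \<le> e" .
  qed (use d in simp)
qed

lemma closed_ball_subset: "closed {x. ball x d \<subseteq> U}"
proof -
  have "- {x. ball x d \<subseteq> U} = (\<Union>y\<in>-U. ball y d)"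
    by (auto simp: subset_eq dist_commute)
  then show ?thesis by (metis closed_def double_complement open_UN open_ball)
qed

text \<open>Translating \<open>A\<close> by less than \<open>d\<close> moves it only within \<open>U\<close>, up to the two small sets.\<close>
lemma open_superset_with_margin:
  fixes A :: "real set"
  assumes A: "A \<in> sets borel" "emeasure lborel A < \<infinity>" and e: "e > 0"
  obtains U d where "open U" "A \<subseteq> U" "emeasure lborel U < \<infinity>" "d > 0"
    "measure lborel (U - A) < e" "measure lborel (U - {x. ball x d \<subseteq> U}) < e"
proof -
  obtain U where U: "open U" "A \<subseteq> U" "emeasure lborel (U - A) < ennreal e"
    using outer_regular_lborel[OF A(1), of e] e by auto
  have [measurable]: "U \<in> sets borel" "A \<in> sets borel" using U(1) A(1) by auto
  have UA: "emeasure lborel (U - A) < \<infinity>" using U(3) by (simp add: order_less_trans)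
  have "emeasure lborel U \<le> emeasure lborel A + emeasure lborel (U - A)"
    using U(2) by (intro order_trans[OF emeasure_mono emeasure_subadditive]) auto
  with A(2) UA have Ufin: "emeasure lborel U < \<infinity>" by (simp add: order_le_less_trans)
  define W where "W n = {x. ball x (1 / Suc n) \<subseteq> U}" for n :: nat
  have Wm [measurable]: "W n \<in> sets borel" for n
    unfolding W_def using closed_ball_subset by (rule borel_closed)
  have WU: "W n \<subseteq> U" for n unfolding W_def by auto
  have Winc: "incseq W"
  proof (rule incseq_SucI)
    fix n
    have "1 / real (Suc (Suc n)) \<le> 1 / real (Suc n)" by (simp add: frac_le)
    then show "W n \<subseteq> W (Suc n)" unfolding W_def by auto
  qed
  have Wun: "(\<Union>n. W n) = U"
  proof (intro equalityI subsetI)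
    fix x assume "x \<in> U"
    then obtain r where r: "r > 0" "ball x r \<subseteq> U" using U(1) open_contains_ball by blast
    obtain n where "1 / Suc n < r" using r(1) by (metis nat_approx_posE)
    then have "ball x (1 / Suc n) \<subseteq> U" using r(2) by auto
    then show "x \<in> (\<Union>n. W n)" unfolding W_def by auto
  qed (use WU in auto)
  have "(\<lambda>n. measure lborel (W n)) \<longlonglongrightarrow> measure lborel (\<Union>n. W n)"
    by (rule Lim_measure_incseq) (use Winc Ufin Wun in auto)
  then have "(\<lambda>n. measure lborel (W n)) \<longlonglongrightarrow> measure lborel U" by (simp add: Wun)
  then obtain n where n: "measure lborel U - e < measure lborel (W n)"
    using order_tendstoD(1)[of _ "measure lborel U" sequentially "measure lborel U - e"] e
    by (auto simp: eventually_sequentially)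
  have "measure lborel (U - W n) = measure lborel U - measure lborel (W n)"
    by (rule measure_Diff) (use Ufin WU in auto)
  moreover have "measure lborel (U - A) < e"
    using U(3) UA e by (simp add: emeasure_eq_ennreal_measure ennreal_less_iff)
  ultimately show ?thesis
    using that[OF U(1,2) Ufin, of "1 / Suc n"] n unfolding W_def by simp
qed

lemma indicator_shift_diff_le:
  fixes A U :: "real set"
  assumes "A \<subseteq> U" "\<bar>z\<bar> < d"
  defines "W \<equiv> {x. ball x d \<subseteq> U}"
  shows "(cmod (complex_of_real (indicator A (x + z)) - complex_of_real (indicator A x)))\<^sup>2
    \<le> indicator (U - A) x + indicator (U - A) (x + z) + indicator (U - W) x + indicator (U - W) (x + z)"
proof -
  have near: "x + z \<in> ball x d" "x \<in> ball (x + z) d"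
    using assms(2) by (auto simp: dist_real_def)
  show ?thesis
  proof (cases "(x + z \<in> A) = (x \<in> A)")
    case True
    then show ?thesis by (simp add: indicator_def)
  next
    case False
    then have lhs: "(cmod (complex_of_real (indicator A (x + z)) - complex_of_real (indicator A x)))\<^sup>2 = 1"
      by (cases "x \<in> A") (simp_all add: indicator_def)
    from False have "x \<in> U - A \<or> x + z \<in> U - A \<or> x \<in> U - W \<or> x + z \<in> U - W"
      using assms(1) near unfolding W_def by blast
    then show ?thesis
      unfolding lhs by (elim disjE) (simp_all add: indicator_def)
  qed
qed

lemma L2_shift_continuous_indicator:
  assumes A: "A \<in> sets borel" "emeasure lborel A < \<infinity>"
  shows "L2_shift_continuous (\<lambda>x. complex_of_real (indicator A x))"
  unfolding L2_shift_continuous_def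
proof (intro conjI allI impI)
  have [measurable]: "A \<in> sets borel" by fact
  have "(\<lambda>x. (cmod (complex_of_real (indicator A x)))\<^sup>2) = (indicator A :: real \<Rightarrow> real)"
    by (auto simp: indicator_def)
  then show "sq_integrable (\<lambda>x. complex_of_real (indicator A x))"
    unfolding sq_integrable_def using A by auto
  fix e :: real assume e: "e > 0"
  obtain U d where U: "open U" "A \<subseteq> U" "emeasure lborel U < \<infinity>" "d > 0"
    "measure lborel (U - A) < e/4" "measure lborel (U - {x. ball x d \<subseteq> U}) < e/4"
    using open_superset_with_margin[OF A, of "e/4"] e by auto
  define W where "W = {x. ball x d \<subseteq> U}"
  have [measurable]: "U \<in> sets borel" "W \<in> sets borel"
    using U(1) borel_closed[OF closed_ball_subset] unfolding W_def by auto
  have fin: "emeasure lborel (U - A) < \<infinity>" "emeasure lborel (U - W) < \<infinity>"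
    using U(3) emeasure_mono[of "U - A" U lborel] emeasure_mono[of "U - W" U lborel]
    by (auto intro: order_le_less_trans)
  show "\<exists>d>0. \<forall>z. \<bar>z\<bar> < d \<longrightarrow>
      L2_sqnorm (\<lambda>x. complex_of_real (indicator A (x + z)) - complex_of_real (indicator A x)) \<le> e"
  proof (intro exI[of _ d] conjI allI impI)
    fix z :: real assume z: "\<bar>z\<bar> < d"
    have int: "integrable lborel (indicator (U - A) :: real \<Rightarrow> real)"
      "integrable lborel (indicator (U - W) :: real \<Rightarrow> real)"
      using fin by auto
    then have int_shift: "integrable lborel (\<lambda>x. indicator (U - A) (x + z) :: real)"
      "integrable lborel (\<lambda>x. indicator (U - W) (x + z) :: real)"
      using lborel_integrable_shift_iff[of _ z] by blast+
    have "L2_sqnorm (\<lambda>x. complex_of_real (indicator A (x + z)) - complex_of_real (indicator A x))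
        \<le> (LINT x|lborel. indicator (U - A) x + indicator (U - A) (x + z)
                           + indicator (U - W) x + indicator (U - W) (x + z))"
      by (rule L2_sqnorm_le_integral)
         (use int int_shift indicator_shift_diff_le[OF U(2) z] in \<open>auto simp: W_def\<close>)
    also have "\<dots> = 2 * measure lborel (U - A) + 2 * measure lborel (U - W)"
      using int int_shift
      by (simp add: lborel_integral_shift[of "indicator (U - A) :: real \<Rightarrow> real" z]
                    lborel_integral_shift[of "indicator (U - W) :: real \<Rightarrow> real" z])
    also have "\<dots> \<le> e" using U(5,6) unfolding W_def by linarith
    finally show "L2_sqnorm (\<lambda>x. complex_of_real (indicator A (x + z))
      - complex_of_real (indicator A x)) \<le> e" .
  qed (use U in simp)
qed

lemma L2_shift_continuous_simple_function:
  assumes sf: "simple_function lborel s" and sq: "sq_integrable s"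
  shows "L2_shift_continuous s"
proof -
  have finR: "finite (range s)" using sf unfolding simple_function_def by simp
  have [measurable]: "s \<in> borel_measurable borel" using sq by (rule sq_integrable_borel_measurable)
  have level: "L2_shift_continuous (\<lambda>x. c * complex_of_real (indicator (s -` {c}) x))" for c
  proof (cases "c = 0")
    case True
    then show ?thesis using L2_shift_continuous_zero by simp
  next
    case False
    have [measurable]: "s -` {c} \<in> sets borel"
      using measurable_sets[of s borel borel "{c}"] by simp
    have "integrable lborel (indicator (s -` {c}) :: real \<Rightarrow> real)"
    proof (rule Bochner_Integration.integrable_bound)
      show "integrable lborel (\<lambda>x. (cmod (s x))\<^sup>2 / (cmod c)\<^sup>2)"
        using sq by (simp add: sq_integrable_def)
      show "AE x in lborel. norm (indicator (s -` {c}) x :: real) \<le> norm ((cmod (s x))\<^sup>2 / (cmod c)\<^sup>2)"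
        using False by (auto simp: indicator_def intro!: AE_I2)
    qed simp
    then have "emeasure lborel (s -` {c}) < \<infinity>" by (simp add: integrable_indicator_iff)
    then show ?thesis
      using L2_shift_continuous_cmult L2_shift_continuous_indicator by simp
  qed
  have "L2_shift_continuous (\<lambda>x. \<Sum>c\<in>C. c * complex_of_real (indicator (s -` {c}) x))"
    if "finite C" for C
    using that
  proof (induction C rule: finite_induct)
    case empty
    then show ?case using L2_shift_continuous_zero by simp
  next
    case (insert c C)
    then show ?case using L2_shift_continuous_add[OF level[of c] insert.IH] by simp
  qed
  moreover have "(\<Sum>c\<in>range s. c * complex_of_real (indicator (s -` {c}) x)) = s x" for x
  proof -
    have "(\<Sum>c\<in>range s. c * complex_of_real (indicator (s -` {c}) x))
        = (\<Sum>c\<in>range s. if c = s x then c else 0)"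
      by (intro sum.cong) (auto simp: indicator_def)
    then show ?thesis using finR by simp
  qed
  ultimately show ?thesis using finR by (metis (no_types, lifting) ext)
qed

lemma sq_integrable_L2_shift_continuous:
  assumes u: "sq_integrable u"
  shows "L2_shift_continuous u"
proof (rule L2_shift_continuous_approx[OF u])
  have [measurable]: "u \<in> borel_measurable borel" using u by (rule sq_integrable_borel_measurable)
  obtain F where F: "\<And>i. simple_function lborel (F i)" "\<And>x. (\<lambda>i. F i x) \<longlonglongrightarrow> u x"
      "\<And>i x. dist (F i x) 0 \<le> 2 * dist (u x) 0"
    using borel_measurable_implies_sequence_metric[of u lborel 0] by auto
  have [measurable]: "F i \<in> borel_measurable borel" for i
    using borel_measurable_simple_function[OF F(1)[of i]] by simp
  have bound: "cmod (F i x) \<le> 2 * cmod (u x)" for i x using F(3)[of i x] by simp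
  have sq_F: "sq_integrable (F i)" for i
  proof -
    have "sq_integrable (\<lambda>x. (F i x / u x) * u x)"
      by (rule sq_integrable_bounded_mult[OF u, of _ 2])
         (use bound in \<open>auto simp: norm_divide divide_le_eq\<close>)
    moreover have "(F i x / u x) * u x = F i x" for x
      using bound[of i x] by (cases "u x = 0") auto
    ultimately show ?thesis by simp
  qed
  have "(\<lambda>i. LINT x|lborel. (cmod (u x - F i x))\<^sup>2) \<longlonglongrightarrow> (LINT x::real|lborel. 0::real)"
  proof (rule Bochner_Integration.integral_dominated_convergence[where w = "\<lambda>x. 9 * (cmod (u x))\<^sup>2"])
    show "integrable lborel (\<lambda>x. 9 * (cmod (u x))\<^sup>2)" using u by (simp add: sq_integrable_def)
    have "(\<lambda>i. u x - F i x) \<longlonglongrightarrow> u x - u x" for x by (intro tendsto_intros F(2))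
    then have "(\<lambda>i. (cmod (u x - F i x))\<^sup>2) \<longlonglongrightarrow> (cmod (u x - u x))\<^sup>2" for x
      by (intro tendsto_power tendsto_norm)
    then show "AE x in lborel. (\<lambda>i. (cmod (u x - F i x))\<^sup>2) \<longlonglongrightarrow> 0" by simp
    have "cmod (u x - F i x) \<le> 3 * cmod (u x)" for i x
      using norm_triangle_ineq4[of "u x" "F i x"] bound[of i x] by simp
    then have "(cmod (u x - F i x))\<^sup>2 \<le> (3 * cmod (u x))\<^sup>2" for i x by (intro power_mono) auto
    then show "AE x in lborel. norm ((cmod (u x - F i x))\<^sup>2) \<le> 9 * (cmod (u x))\<^sup>2" for i
      by (simp add: power_mult_distrib)
  qed simp_all
  then have lim: "(\<lambda>i. L2_sqnorm (\<lambda>x. u x - F i x)) \<longlonglongrightarrow> 0" by (simp add: L2_sqnorm_def)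
  fix e :: real assume "e > 0"
  with lim have "eventually (\<lambda>i. L2_sqnorm (\<lambda>x. u x - F i x) < e) sequentially"
    by (rule order_tendstoD(2))
  then obtain i where "L2_sqnorm (\<lambda>x. u x - F i x) < e"
    by (auto simp: eventually_sequentially)
  then show "\<exists>v. L2_shift_continuous v \<and> L2_sqnorm (\<lambda>x. u x - v x) \<le> e"
    using L2_shift_continuous_simple_function[OF F(1) sq_F] by (intro exI[of _ "F i"]) auto
qed

section \<open>Fourier transform and Parseval's identity\<close>

lemma integrable_lborel_borel_measurable:
  "integrable lborel (u :: real \<Rightarrow> complex) \<Longrightarrow> u \<in> borel_measurable borel"
  using borel_measurable_integrable[of lborel u] by simp

lemma gaussian_integral:
  assumes e: "\<epsilon> > 0"
  shows integrable_gaussian: "integrable lborel (\<lambda>x. exp (- \<epsilon> * x\<^sup>2))"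
    and integral_gaussian: "(LINT x|lborel. exp (- \<epsilon> * x\<^sup>2)) = sqrt (pi / \<epsilon>)"
proof -
  define \<sigma> where "\<sigma> = 1 / sqrt (2 * \<epsilon>)"
  have \<sigma>: "\<sigma> > 0" "\<sigma>\<^sup>2 = 1 / (2 * \<epsilon>)" using e by (simp_all add: \<sigma>_def power_divide)
  have eq: "exp (- \<epsilon> * x\<^sup>2) = sqrt (pi / \<epsilon>) * normal_density 0 \<sigma> x" for x
  proof -
    have "2 * pi * \<sigma>\<^sup>2 = pi / \<epsilon>" "- (x - 0)\<^sup>2 / (2 * \<sigma>\<^sup>2) = - \<epsilon> * x\<^sup>2"
      unfolding \<sigma>(2) using e by (simp_all add: field_simps)
    then show ?thesis unfolding normal_density_def using e by simp
  qed
  show "integrable lborel (\<lambda>x. exp (- \<epsilon> * x\<^sup>2))"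
    unfolding eq using integrable_normal_density[OF \<sigma>(1)] by simp
  show "(LINT x|lborel. exp (- \<epsilon> * x\<^sup>2)) = sqrt (pi / \<epsilon>)"
    unfolding eq using integral_normal_density[OF \<sigma>(1)] by simp
qed

definition gauss_kernel :: "real \<Rightarrow> real \<Rightarrow> real" where
  "gauss_kernel \<epsilon> z = sqrt (pi / \<epsilon>) * exp (- z\<^sup>2 / (4 * \<epsilon>))"

lemma gauss_kernel_pos: "\<epsilon> > 0 \<Longrightarrow> gauss_kernel \<epsilon> z > 0"
  unfolding gauss_kernel_def by simp

lemma gauss_kernel_le: "\<epsilon> > 0 \<Longrightarrow> gauss_kernel \<epsilon> z \<le> sqrt (pi / \<epsilon>)"
  unfolding gauss_kernel_def by (simp add: mult_le_cancel_left1)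

lemma borel_measurable_gauss_kernel [measurable]: "gauss_kernel \<epsilon> \<in> borel_measurable borel"
  unfolding gauss_kernel_def by measurable

lemma gauss_kernel_integral:
  assumes e: "\<epsilon> > 0"
  shows integrable_gauss_kernel: "integrable lborel (gauss_kernel \<epsilon>)"
    and integral_gauss_kernel: "(LINT z|lborel. gauss_kernel \<epsilon> z) = 2 * pi"
proof -
  have eq: "gauss_kernel \<epsilon> = (\<lambda>z. sqrt (pi / \<epsilon>) * exp (- (1 / (4 * \<epsilon>)) * z\<^sup>2))"
    unfolding gauss_kernel_def by (auto simp: fun_eq_iff)
  have e': "1 / (4 * \<epsilon>) > 0" using e by simp
  show "integrable lborel (gauss_kernel \<epsilon>)" unfolding eq using integrable_gaussian[OF e'] by simp
  have "(LINT z|lborel. gauss_kernel \<epsilon> z) = sqrt (pi / \<epsilon> * (pi / (1 / (4 * \<epsilon>))))"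
    unfolding eq integral_mult_right_zero integral_gaussian[OF e'] by (rule real_sqrt_mult[symmetric])
  also have "pi / \<epsilon> * (pi / (1 / (4 * \<epsilon>))) = (2 * pi)\<^sup>2"
    using e by (simp add: power2_eq_square field_simps)
  also have "sqrt ((2 * pi)\<^sup>2) = 2 * pi" by (rule real_sqrt_abs[THEN trans]) simp
  finally show "(LINT z|lborel. gauss_kernel \<epsilon> z) = 2 * pi" .
qed

text \<open>Read off from the characteristic function of the standard normal distribution.\<close>
lemma fourier_gaussian:
  assumes e: "\<epsilon> > 0"
  shows "(CLINT w|lborel. complex_of_real (exp (- \<epsilon> * w\<^sup>2)) * cis (- (s * w)))
    = complex_of_real (gauss_kernel \<epsilon> s)"
proof -
  define c where "c = sqrt (2 * \<epsilon>)"
  have c: "c > 0" "c\<^sup>2 = 2 * \<epsilon>" using e by (simp_all add: c_def)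
  define t where "t = - s / c"
  have "complex_of_real (exp (- t\<^sup>2 / 2)) = char std_normal_distribution t"
    by (simp add: char_std_normal_distribution)
  also have "\<dots> = (CLINT x|lborel. std_normal_density x *\<^sub>R iexp (t * x))"
    unfolding char_def by (subst integral_density) auto
  also have "\<dots> = c *\<^sub>R (CLINT w|lborel. std_normal_density (0 + c * w) *\<^sub>R iexp (t * (0 + c * w)))"
    using lborel_integral_real_affine[of c "\<lambda>x. std_normal_density x *\<^sub>R iexp (t * x)" 0] c by simp
  also have "(\<lambda>w. std_normal_density (0 + c * w) *\<^sub>R iexp (t * (0 + c * w)))
      = (\<lambda>w. (1 / sqrt (2 * pi)) *\<^sub>R (complex_of_real (exp (- \<epsilon> * w\<^sup>2)) * cis (- (s * w))))"
  proof
    fix w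
    have "- (c * w)\<^sup>2 / 2 = - \<epsilon> * w\<^sup>2" "t * (c * w) = - (s * w)"
      using c by (simp_all add: power_mult_distrib t_def)
    then show "std_normal_density (0 + c * w) *\<^sub>R iexp (t * (0 + c * w))
      = (1 / sqrt (2 * pi)) *\<^sub>R (complex_of_real (exp (- \<epsilon> * w\<^sup>2)) * cis (- (s * w)))"
      by (simp add: std_normal_density_def scaleR_conv_of_real cis_conv_exp)
  qed
  finally have "complex_of_real (exp (- t\<^sup>2 / 2)) = (c / sqrt (2 * pi)) *\<^sub>R
      (CLINT w|lborel. complex_of_real (exp (- \<epsilon> * w\<^sup>2)) * cis (- (s * w)))"
    by simp
  moreover have "exp (- t\<^sup>2 / 2) = exp (- s\<^sup>2 / (4 * \<epsilon>))"
    using c by (simp add: t_def power_divide)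
  moreover have "sqrt (2 * pi) / c = sqrt (pi / \<epsilon>)"
    using e by (simp add: c_def real_sqrt_divide[symmetric])
  ultimately show ?thesis
    using c by (simp add: gauss_kernel_def scaleR_conv_of_real field_simps)
qed

definition fourier :: "(real \<Rightarrow> complex) \<Rightarrow> real \<Rightarrow> complex" where
  "fourier u w = (CLINT x|lborel. u x * cis (- (w * x)))"

lemma borel_measurable_fourier:
  assumes "integrable lborel u"
  shows "fourier u \<in> borel_measurable borel"
proof -
  have [measurable]: "u \<in> borel_measurable borel"
    using assms by (rule integrable_lborel_borel_measurable)
  have "(\<lambda>w. CLINT x|lborel. u x * cis (- (w * x))) \<in> borel_measurable lborel"
    by (rule lborel.borel_measurable_lebesgue_integral) measurable
  then show ?thesis unfolding fourier_def by simp
qed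

lemma norm_fourier_le:
  "integrable lborel u \<Longrightarrow> cmod (fourier u w) \<le> (LINT x|lborel. cmod (u x))"
  using integral_norm_bound[of lborel "\<lambda>x. u x * cis (- (w * x))"]
  by (simp add: fourier_def norm_mult)

lemma fourier_mult_cnj:
  "fourier u w * cnj (fourier v w) =
    (CLINT x|lborel. CLINT y|lborel. u x * cnj (v y) * cis (- (w * (x - y))))"
proof -
  have "cnj (fourier v w) = (CLINT y|lborel. cnj (v y * cis (- (w * y))))"
    unfolding fourier_def by (rule Bochner_Integration.integral_cnj[symmetric])
  also have "\<dots> = (CLINT y|lborel. cnj (v y) * cis (w * y))" by (simp add: cis_cnj)
  finally have "fourier u w * cnj (fourier v w) =
      (CLINT x|lborel. CLINT y|lborel. u x * cis (- (w * x)) * (cnj (v y) * cis (w * y)))"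
    unfolding fourier_def by simp
  also have "\<dots> = (CLINT x|lborel. CLINT y|lborel. u x * cnj (v y) * cis (- (w * (x - y))))"
  proof (intro Bochner_Integration.integral_cong refl)
    fix x y
    have "cis (- (w * x)) * cis (w * y) = cis (- (w * (x - y)))"
      by (simp add: cis_mult algebra_simps)
    then show "u x * cis (- (w * x)) * (cnj (v y) * cis (w * y)) = u x * cnj (v y) * cis (- (w * (x - y)))"
      by (metis mult.assoc mult.left_commute)
  qed
  finally show ?thesis .
qed

lemma (in pair_sigma_finite) integrable_pair_mult:
  fixes f :: "'a \<Rightarrow> complex" and g :: "'b \<Rightarrow> complex"
  assumes f: "integrable M1 f" and g: "integrable M2 g"
  shows "integrable (M1 \<Otimes>\<^sub>M M2) (\<lambda>p. f (fst p) * g (snd p))"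
proof (rule Fubini_integrable)
  have [measurable]: "f \<in> borel_measurable M1" "g \<in> borel_measurable M2" using f g by auto
  show "(\<lambda>p. f (fst p) * g (snd p)) \<in> borel_measurable (M1 \<Otimes>\<^sub>M M2)" by measurable
  have "integrable M1 (\<lambda>x. norm (f x) * (\<integral>y. norm (g y) \<partial>M2))"
    using f by (intro integrable_mult_left) auto
  then show "integrable M1 (\<lambda>x. \<integral>y. norm (f (fst (x, y)) * g (snd (x, y))) \<partial>M2)"
    by (simp add: norm_mult)
  show "AE x in M1. integrable M2 (\<lambda>y. f (fst (x, y)) * g (snd (x, y)))"
    using g by (auto intro!: integrable_mult_right)
qed

lemma lborel_prod_iterated_integral:
  fixes F :: "real \<times> real \<Rightarrow> complex"
  assumes "integrable lborel F"
  shows "(CLINT x|lborel. CLINT y|lborel. F (x, y)) = integral\<^sup>L lborel F"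
  using lborel_pair.integral_fst'[of F] assms by (simp add: lborel_prod)

lemma borel_measurable_lborel_prod_lborel:
  assumes "f \<in> borel_measurable ((borel \<Otimes>\<^sub>M borel) \<Otimes>\<^sub>M borel)"
  shows "f \<in> borel_measurable ((lborel :: (real \<times> real) measure) \<Otimes>\<^sub>M (lborel :: real measure))"
proof -
  have "sets (lborel :: (real \<times> real) measure) = sets (borel \<Otimes>\<^sub>M borel)"
    by (metis borel_prod sets_lborel)
  then have "sets ((lborel :: (real \<times> real) measure) \<Otimes>\<^sub>M (lborel :: real measure))
      = sets ((borel \<Otimes>\<^sub>M borel) \<Otimes>\<^sub>M borel)"
    by (rule sets_pair_measure_cong) simp
  then have eq: "borel_measurable ((lborel :: (real \<times> real) measure) \<Otimes>\<^sub>M (lborel :: real measure))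
      = borel_measurable ((borel \<Otimes>\<^sub>M borel) \<Otimes>\<^sub>M borel)"
    by (rule measurable_cong_sets) simp
  show ?thesis unfolding eq by (rule assms)
qed

lemma integrable_lborel_prod_mult_bounded:
  fixes A \<phi> :: "real \<times> real \<Rightarrow> complex"
  assumes A: "integrable lborel A" and \<phi>: "\<phi> \<in> borel_measurable (borel \<Otimes>\<^sub>M borel)" "\<And>p. cmod (\<phi> p) \<le> C"
  shows "integrable lborel (\<lambda>p. A p * \<phi> p)"
proof (rule Bochner_Integration.integrable_bound[where f = "\<lambda>p. C *\<^sub>R A p"])
  show "integrable lborel (\<lambda>p. C *\<^sub>R A p)" using A by simp
  have [measurable]: "A \<in> borel_measurable (borel \<Otimes>\<^sub>M borel)" "\<phi> \<in> borel_measurable (borel \<Otimes>\<^sub>M borel)"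
    using borel_measurable_integrable[OF A] \<phi>(1) by (simp_all add: borel_prod)
  have "(\<lambda>p. A p * \<phi> p) \<in> borel_measurable (borel \<Otimes>\<^sub>M borel)" by measurable
  then show "(\<lambda>p. A p * \<phi> p) \<in> borel_measurable lborel" by (simp add: borel_prod)
  have "C \<ge> 0" using \<phi>(2) norm_ge_zero order_trans by blast
  moreover have "cmod (A p) * cmod (\<phi> p) \<le> cmod (A p) * C" for p
    by (rule mult_left_mono[OF \<phi>(2)]) simp
  ultimately show "AE p in lborel. norm (A p * \<phi> p) \<le> norm (C *\<^sub>R A p)"
    by (intro AE_I2) (simp add: norm_mult mult.commute)
qed

lemma fourier_mult_cnj_eq_lborel_prod_integral:
  assumes u: "integrable lborel u" and v: "integrable lborel v"
  shows "fourier u w * cnj (fourier v w)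
    = (\<integral>p. u (fst p) * cnj (v (snd p)) * cis (- (w * (fst p - snd p))) \<partial>lborel)"
proof -
  have "integrable lborel (\<lambda>p::real \<times> real. u (fst p) * cnj (v (snd p)))"
    using lborel_pair.integrable_pair_mult[OF u integrable_cnj[OF v]] by (simp add: lborel_prod)
  then have "integrable lborel (\<lambda>p. u (fst p) * cnj (v (snd p)) * cis (- (w * (fst p - snd p))))"
    by (rule integrable_lborel_prod_mult_bounded[where C = 1]) simp_all
  then show ?thesis
    unfolding fourier_mult_cnj by (subst lborel_prod_iterated_integral[symmetric]) (simp_all add: mult.assoc)
qed

text \<open>Damping the product of the transforms by a Gaussian makes Fubini applicable; the
  Gaussian then turns into the kernel \<open>gauss_kernel \<epsilon> (x - y)\<close>.\<close>
lemma gauss_damped_fourier_inner_eq_double_integral: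
  fixes u v :: "real \<Rightarrow> complex"
  assumes u: "integrable lborel u" and v: "integrable lborel v" and e: "\<epsilon> > 0"
  shows "(CLINT w|lborel. complex_of_real (exp (- \<epsilon> * w\<^sup>2)) * (fourier u w * cnj (fourier v w)))
       = (CLINT x|lborel. CLINT y|lborel. u x * cnj (v y) * complex_of_real (gauss_kernel \<epsilon> (x - y)))"
proof -
  have [measurable]: "u \<in> borel_measurable borel" "v \<in> borel_measurable borel"
    using u v by (auto simp: integrable_lborel_borel_measurable)
  define A where "A = (\<lambda>p::real \<times> real. u (fst p) * cnj (v (snd p)))"
  have A: "integrable lborel A"
    using lborel_pair.integrable_pair_mult[OF u integrable_cnj[OF v]] by (simp add: A_def lborel_prod)
  define E where "E = (\<lambda>w::real. complex_of_real (exp (- \<epsilon> * w\<^sup>2)))"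
  have E: "integrable lborel E" unfolding E_def using integrable_gaussian[OF e] by simp
  define k where "k = (\<lambda>(p::real \<times> real) (w::real). A p * cis (- (w * (fst p - snd p))) * E w)"
  have k: "integrable (lborel \<Otimes>\<^sub>M lborel) (case_prod k)"
  proof (rule Bochner_Integration.integrable_bound)
    show "integrable (lborel \<Otimes>\<^sub>M lborel) (\<lambda>q. A (fst q) * E (snd q))"
      by (rule lborel_pair.integrable_pair_mult[OF A E])
    show "case_prod k \<in> borel_measurable (lborel \<Otimes>\<^sub>M lborel)"
      unfolding k_def E_def A_def by (rule borel_measurable_lborel_prod_lborel) measurable
    show "AE q in lborel \<Otimes>\<^sub>M lborel. norm (case_prod k q) \<le> norm (A (fst q) * E (snd q))"
      by (intro AE_I2) (auto simp: k_def norm_mult)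
  qed
  have "(\<integral>p. k p w \<partial>lborel) = (\<integral>p. A p * cis (- (w * (fst p - snd p))) \<partial>lborel) * E w" for w
    unfolding k_def by simp
  then have L: "E w * (fourier u w * cnj (fourier v w)) = (\<integral>p. k p w \<partial>lborel)" for w
    unfolding fourier_mult_cnj_eq_lborel_prod_integral[OF u v] A_def by (simp only: mult.commute)
  have "k p w = A p * (complex_of_real (exp (- \<epsilon> * w\<^sup>2)) * cis (- ((fst p - snd p) * w)))" for p w
    unfolding k_def E_def by (simp add: mult_ac)
  then have "(\<integral>w. k p w \<partial>lborel)
      = A p * (CLINT w|lborel. complex_of_real (exp (- \<epsilon> * w\<^sup>2)) * cis (- ((fst p - snd p) * w)))" for p
    by simp
  then have R: "(\<integral>w. k p w \<partial>lborel) = A p * complex_of_real (gauss_kernel \<epsilon> (fst p - snd p))" for p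
    unfolding fourier_gaussian[OF e] .
  have "integrable lborel (\<lambda>p. A p * complex_of_real (gauss_kernel \<epsilon> (fst p - snd p)))"
    by (rule integrable_lborel_prod_mult_bounded[OF A, where C = "sqrt (pi / \<epsilon>)"])
       (use gauss_kernel_le[OF e] gauss_kernel_pos[OF e] in \<open>simp_all add: abs_of_pos\<close>)
  then have "(\<integral>p. A p * complex_of_real (gauss_kernel \<epsilon> (fst p - snd p)) \<partial>lborel)
      = (CLINT x|lborel. CLINT y|lborel. u x * cnj (v y) * complex_of_real (gauss_kernel \<epsilon> (x - y)))"
    by (subst lborel_prod_iterated_integral[symmetric]) (simp_all add: A_def)
  moreover have "(CLINT w|lborel. \<integral>p. k p w \<partial>lborel) = (\<integral>p. \<integral>w. k p w \<partial>lborel \<partial>lborel)"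
    by (rule lborel_pair.Fubini_integral[OF k])
  ultimately show ?thesis using L R unfolding E_def by simp
qed

definition correlation :: "(real \<Rightarrow> complex) \<Rightarrow> (real \<Rightarrow> complex) \<Rightarrow> real \<Rightarrow> complex" where
  "correlation u v z = (CLINT x|lborel. u x * cnj (v (x - z)))"

lemma lborel_integral_reflect:
  fixes f :: "real \<Rightarrow> 'a::{banach, second_countable_topology}"
  shows "(LINT y|lborel. f y) = (LINT z|lborel. f (x - z))"
  using lborel_integral_real_affine[of "-1" f x] by simp

lemma lborel_integrable_reflect_iff:
  fixes f :: "real \<Rightarrow> 'a::{banach, second_countable_topology}"
  shows "integrable lborel (\<lambda>z. f (x - z)) \<longleftrightarrow> integrable lborel f"
  using lborel_integrable_real_affine_iff[of "-1" f x] by simp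

lemma integrable_correlation_kernel:
  fixes u v K :: "real \<Rightarrow> complex"
  assumes u: "integrable lborel u" and v: "integrable lborel v"
    and K: "K \<in> borel_measurable borel" "\<And>z. cmod (K z) \<le> C"
  shows "integrable (lborel \<Otimes>\<^sub>M lborel) (\<lambda>(x, z). u x * cnj (v (x - z)) * K z)"
proof -
  have [measurable]: "u \<in> borel_measurable borel" "v \<in> borel_measurable borel" "K \<in> borel_measurable borel"
    using u v K(1) by (auto simp: integrable_lborel_borel_measurable)
  define h where "h = (\<lambda>x z. u x * cnj (v (x - z)) * K z)"
  have "C \<ge> 0" using K(2) norm_ge_zero order_trans by blast
  have h_le: "cmod (h x z) \<le> C * (cmod (u x) * cmod (v (x - z)))" for x z
    using mult_left_mono[OF K(2), of "cmod (u x) * cmod (v (x - z))" z]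
    by (simp add: h_def norm_mult mult_ac)
  have v_refl: "integrable lborel (\<lambda>z. v (x - z))" for x
    using v lborel_integrable_reflect_iff[of v x] by simp
  have h_int: "integrable lborel (h x)" for x
  proof (rule Bochner_Integration.integrable_bound[where f = "\<lambda>z. (C * cmod (u x)) *\<^sub>R v (x - z)"])
    show "integrable lborel (\<lambda>z. (C * cmod (u x)) *\<^sub>R v (x - z))" using v_refl[of x] by simp
    show "AE z in lborel. norm (h x z) \<le> norm ((C * cmod (u x)) *\<^sub>R v (x - z))"
      using h_le \<open>C \<ge> 0\<close> by (intro AE_I2) (simp add: abs_mult mult_ac)
  qed (simp add: h_def)
  have "(LINT z|lborel. norm (h x z)) \<le> (LINT z|lborel. C * (cmod (u x) * cmod (v (x - z))))" for x
    by (intro integral_mono h_le) (use h_int v_refl in simp_all)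
  also have "(LINT z|lborel. C * (cmod (u x) * cmod (v (x - z)))) = C * cmod (u x) * (LINT y|lborel. cmod (v y))" for x
    using lborel_integral_reflect[of "\<lambda>y. cmod (v y)" x] by simp
  finally have integral_le: "(LINT z|lborel. norm (h x z)) \<le> C * cmod (u x) * (LINT y|lborel. cmod (v y))" for x .
  have bound: "norm (LINT z|lborel. norm (h x z)) \<le> norm (C * cmod (u x) * (LINT y|lborel. cmod (v y)))" for x
    unfolding real_norm_def
    by (rule order_trans[OF _ abs_ge_self]) (use integral_le[of x] in \<open>simp add: integral_nonneg_AE\<close>)
  have "integrable (lborel \<Otimes>\<^sub>M lborel) (case_prod h)"
  proof (rule lborel_pair.Fubini_integrable)
    show "AE x in lborel. integrable lborel (\<lambda>y. case_prod h (x, y))" using h_int by simp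
    show "integrable lborel (\<lambda>x. LINT y|lborel. norm (case_prod h (x, y)))"
    proof (rule Bochner_Integration.integrable_bound[where f = "\<lambda>x. C * cmod (u x) * (LINT y|lborel. cmod (v y))"])
      show "integrable lborel (\<lambda>x. C * cmod (u x) * (LINT y|lborel. cmod (v y)))"
        using u by simp
      show "(\<lambda>x. LINT y|lborel. norm (case_prod h (x, y))) \<in> borel_measurable lborel"
        by (rule lborel.borel_measurable_lebesgue_integral) (simp add: h_def)
      show "AE x in lborel. norm (LINT y|lborel. norm (case_prod h (x, y)))
          \<le> norm (C * cmod (u x) * (LINT y|lborel. cmod (v y)))"
        using bound by (intro AE_I2) simp
    qed
  qed (simp add: h_def)
  then show ?thesis by (simp add: h_def)
qed

lemma double_integral_gauss_kernel_eq_correlation: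
  fixes u v :: "real \<Rightarrow> complex"
  assumes u: "integrable lborel u" and v: "integrable lborel v" and e: "\<epsilon> > 0"
  shows "(CLINT x|lborel. CLINT y|lborel. u x * cnj (v y) * complex_of_real (gauss_kernel \<epsilon> (x - y)))
       = (CLINT z|lborel. complex_of_real (gauss_kernel \<epsilon> z) * correlation u v z)"
proof -
  define h where "h = (\<lambda>x z. u x * cnj (v (x - z)) * complex_of_real (gauss_kernel \<epsilon> z))"
  have "integrable (lborel \<Otimes>\<^sub>M lborel) (case_prod h)"
    unfolding h_def
    by (rule integrable_correlation_kernel[OF u v, where C = "sqrt (pi / \<epsilon>)"])
       (use gauss_kernel_le[OF e] gauss_kernel_pos[OF e] in \<open>simp_all add: abs_of_pos\<close>)
  then have "(CLINT x|lborel. CLINT z|lborel. h x z) = (CLINT z|lborel. CLINT x|lborel. h x z)"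
    by (rule lborel_pair.Fubini_integral[symmetric])
  moreover have "(CLINT y|lborel. u x * cnj (v y) * complex_of_real (gauss_kernel \<epsilon> (x - y)))
      = (CLINT z|lborel. h x z)" for x
    unfolding h_def by (subst lborel_integral_reflect[of _ x]) simp
  ultimately show ?thesis
    unfolding correlation_def h_def by (simp add: mult.commute)
qed

lemma gauss_damped_fourier_inner:
  assumes "integrable lborel u" "integrable lborel v" "\<epsilon> > 0"
  shows "(CLINT w|lborel. complex_of_real (exp (- \<epsilon> * w\<^sup>2)) * (fourier u w * cnj (fourier v w)))
       = (CLINT z|lborel. complex_of_real (gauss_kernel \<epsilon> z) * correlation u v z)"
  unfolding gauss_damped_fourier_inner_eq_double_integral[OF assms]
    double_integral_gauss_kernel_eq_correlation[OF assms] ..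

lemma norm_correlation_le:
  assumes "sq_integrable u" "sq_integrable v"
  shows "cmod (correlation u v z) \<le> sqrt (L2_sqnorm u * L2_sqnorm v)"
  using Cauchy_Schwarz_L2[OF assms(1) sq_integrable_shift'[OF assms(2)]]
  unfolding correlation_def L2_sqnorm_shift' by (simp add: real_le_rsqrt)

lemma borel_measurable_correlation:
  assumes u: "sq_integrable u" and v: "sq_integrable v"
  shows "correlation u v \<in> borel_measurable borel"
proof -
  have [measurable]: "u \<in> borel_measurable borel" "v \<in> borel_measurable borel"
    using u v by (auto simp: sq_integrable_borel_measurable)
  have "(\<lambda>z. CLINT x|lborel. u x * cnj (v (x - z))) \<in> borel_measurable lborel"
    by (rule lborel.borel_measurable_lebesgue_integral) measurable
  then show ?thesis unfolding correlation_def by simp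
qed

text \<open>Continuity of the correlation at \<open>0\<close> is where continuity of translation in \<open>L\<^sup>2\<close>
  enters, via Cauchy--Schwarz.\<close>
lemma isCont_correlation_0:
  assumes u: "sq_integrable u" and v: "sq_integrable v"
  shows "isCont (correlation u v) 0"
  unfolding isCont_def LIM_eq
proof (intro allI impI)
  fix r :: real assume r: "r > 0"
  define e where "e = r\<^sup>2 / (L2_sqnorm u + 1)"
  have e: "e > 0" using r L2_sqnorm_nonneg[of u] by (simp add: e_def)
  obtain d where d: "d > 0" "\<And>z. \<bar>z\<bar> < d \<Longrightarrow> L2_sqnorm (\<lambda>x. v (x + z) - v x) \<le> e"
    using sq_integrable_L2_shift_continuous[OF v] e unfolding L2_shift_continuous_def by blast
  show "\<exists>s>0. \<forall>z. z \<noteq> 0 \<and> norm (z - 0) < s \<longrightarrow> norm (correlation u v z - correlation u v 0) < r"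
  proof (intro exI[of _ d] conjI allI impI)
    fix z :: real assume "z \<noteq> 0 \<and> norm (z - 0) < d"
    then have z: "\<bar>- z\<bar> < d" by simp
    have "correlation u v z - correlation u v 0 = (CLINT x|lborel. u x * cnj (v (x - z) - v x))"
      unfolding correlation_def
      by (subst Bochner_Integration.integral_diff[symmetric])
         (auto intro!: integrable_mult_cnj_sq_integrable u v sq_integrable_shift' simp: algebra_simps)
    then have "(cmod (correlation u v z - correlation u v 0))\<^sup>2 \<le> L2_sqnorm u * L2_sqnorm (\<lambda>x. v (x - z) - v x)"
      using Cauchy_Schwarz_L2[OF u sq_integrable_diff[OF sq_integrable_shift'[OF v] v, of z]] by simp
    also have "\<dots> \<le> L2_sqnorm u * e"
      using d(2)[OF z] L2_sqnorm_nonneg[of u] by (intro mult_left_mono) auto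
    also have "\<dots> < r\<^sup>2"
      using r L2_sqnorm_nonneg[of u] by (simp add: e_def field_simps)
    finally show "norm (correlation u v z - correlation u v 0) < r"
      using r by (simp add: power_less_imp_less_base)
  qed (use d in simp)
qed

lemma gauss_kernel_rescale:
  assumes "c > 0"
  shows "c * gauss_kernel (c\<^sup>2) (c * w) = sqrt pi * exp (- w\<^sup>2 / 4)"
proof -
  have "c * sqrt (pi / c\<^sup>2) = sqrt pi" "- (c * w)\<^sup>2 / (4 * c\<^sup>2) = - w\<^sup>2 / 4"
    using assms by (simp_all add: real_sqrt_divide power_mult_distrib)
  then show ?thesis unfolding gauss_kernel_def by (simp add: mult.assoc[symmetric])
qed

text \<open>\<open>gauss_kernel (c\<^sup>2)\<close> has integral \<open>2 \<pi>\<close> and concentrates at \<open>0\<close> as \<open>c \<rightarrow> 0\<close>.\<close>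
lemma gauss_kernel_approx_identity:
  fixes F :: "real \<Rightarrow> complex"
  assumes F: "F \<in> borel_measurable borel" "isCont F 0" "\<And>z. cmod (F z) \<le> B"
    and c: "\<And>n. c n > 0" "c \<longlonglongrightarrow> 0"
  shows "(\<lambda>n. CLINT z|lborel. complex_of_real (gauss_kernel ((c n)\<^sup>2) z) * F z) \<longlonglongrightarrow> 2 * pi * F 0"
proof -
  have [measurable]: "F \<in> borel_measurable borel" by fact
  define E where "E w = sqrt pi * exp (- w\<^sup>2 / 4)" for w :: real
  have E_int: "integrable lborel E"
    using integrable_gaussian[of "1/4"] unfolding E_def by simp
  have "(LINT w|lborel. E w) = sqrt pi * sqrt (pi / (1/4))"
    using integral_gaussian[of "1/4"] unfolding E_def by simp
  also have "\<dots> = 2 * pi" by (simp add: real_sqrt_mult)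
  finally have E_integral: "(LINT w|lborel. E w) = 2 * pi" .
  have rescale: "(CLINT z|lborel. complex_of_real (gauss_kernel ((c n)\<^sup>2) z) * F z)
       = (CLINT w|lborel. complex_of_real (E w) * F (c n * w))" for n
  proof -
    have "(CLINT z|lborel. complex_of_real (gauss_kernel ((c n)\<^sup>2) z) * F z)
        = c n *\<^sub>R (CLINT w|lborel. complex_of_real (gauss_kernel ((c n)\<^sup>2) (0 + c n * w)) * F (0 + c n * w))"
      using lborel_integral_real_affine[of "c n" "\<lambda>z. complex_of_real (gauss_kernel ((c n)\<^sup>2) z) * F z" 0] c(1)[of n]
      by simp
    also have "\<dots> = (CLINT w|lborel. complex_of_real (c n * gauss_kernel ((c n)\<^sup>2) (c n * w)) * F (c n * w))"
      by (simp add: scaleR_conv_of_real mult.assoc)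
    finally show ?thesis unfolding gauss_kernel_rescale[OF c(1)] E_def .
  qed
  have "(\<lambda>n. CLINT w|lborel. complex_of_real (E w) * F (c n * w))
        \<longlonglongrightarrow> (CLINT w|lborel. complex_of_real (E w) * F 0)"
  proof (rule Bochner_Integration.integral_dominated_convergence[where w = "\<lambda>w. B * E w"])
    show "integrable lborel (\<lambda>w. B * E w)" using E_int by simp
    have "(\<lambda>n. c n * w) \<longlonglongrightarrow> 0" for w using tendsto_mult[OF c(2) tendsto_const[of w]] by simp
    then have "(\<lambda>n. F (c n * w)) \<longlonglongrightarrow> F 0" for w
      by (rule isCont_tendsto_compose[OF F(2)])
    then show "AE w in lborel. (\<lambda>n. complex_of_real (E w) * F (c n * w)) \<longlonglongrightarrow> complex_of_real (E w) * F 0"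
      by (intro AE_I2 tendsto_intros)
    have "norm (complex_of_real (E w) * F (c n * w)) \<le> B * E w" for n w
    proof -
      have "E w \<ge> 0" unfolding E_def by simp
      then have "E w * cmod (F (c n * w)) \<le> E w * B" by (intro mult_left_mono F(3))
      then show ?thesis using \<open>E w \<ge> 0\<close> by (simp add: norm_mult mult.commute)
    qed
    then show "AE w in lborel. norm (complex_of_real (E w) * F (c n * w)) \<le> B * E w" for n
      by simp
  qed (simp_all add: E_def)
  also have "(CLINT w|lborel. complex_of_real (E w) * F 0) = 2 * pi * F 0"
    using E_integral by simp
  finally show ?thesis unfolding rescale .
qed

lemma norm_gauss_kernel_integral_le:
  fixes F :: "real \<Rightarrow> complex"
  assumes F: "F \<in> borel_measurable borel" "\<And>z. cmod (F z) \<le> B" and e: "\<epsilon> > 0"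
  shows "cmod (CLINT z|lborel. complex_of_real (gauss_kernel \<epsilon> z) * F z) \<le> 2 * pi * B"
proof -
  have [measurable]: "F \<in> borel_measurable borel" by fact
  have le: "cmod (complex_of_real (gauss_kernel \<epsilon> z) * F z) \<le> B * gauss_kernel \<epsilon> z" for z
    using F(2)[of z] gauss_kernel_pos[OF e, of z] by (simp add: norm_mult mult.commute mult_left_mono)
  have int: "integrable lborel (\<lambda>z. B * gauss_kernel \<epsilon> z)"
    using integrable_gauss_kernel[OF e] by simp
  have "cmod (CLINT z|lborel. complex_of_real (gauss_kernel \<epsilon> z) * F z)
      \<le> (LINT z|lborel. cmod (complex_of_real (gauss_kernel \<epsilon> z) * F z))"
    by (rule integral_norm_bound)
  also have "\<dots> \<le> (LINT z|lborel. B * gauss_kernel \<epsilon> z)"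
  proof (rule integral_mono[OF _ int le])
    show "integrable lborel (\<lambda>z. cmod (complex_of_real (gauss_kernel \<epsilon> z) * F z))"
      by (rule Bochner_Integration.integrable_bound[OF int])
         (use le in \<open>auto intro!: AE_I2 intro: order_trans[OF _ abs_ge_self]\<close>)
  qed
  also have "\<dots> = 2 * pi * B" using integral_gauss_kernel[OF e] by simp
  finally show ?thesis .
qed

lemma gauss_damping_incseq: "incseq (\<lambda>n. exp (- (1 / real (Suc n)) * w\<^sup>2))"
proof (rule incseq_SucI)
  fix n
  have "1 / real (Suc (Suc n)) * w\<^sup>2 \<le> 1 / real (Suc n) * w\<^sup>2"
    by (intro mult_right_mono) (auto simp: frac_le)
  then show "exp (- (1 / real (Suc n)) * w\<^sup>2) \<le> exp (- (1 / real (Suc (Suc n))) * w\<^sup>2)" by simp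
qed

lemma gauss_damping_tendsto_1: "(\<lambda>n. exp (- (1 / real (Suc n)) * w\<^sup>2)) \<longlonglongrightarrow> 1"
  using tendsto_exp[OF tendsto_mult[OF tendsto_minus[OF LIMSEQ_Suc[OF lim_const_over_n[of 1]]]
    tendsto_const[of "w\<^sup>2"]]] by simp

lemma gauss_damped_fourier_sqnorm_le:
  assumes u: "integrable lborel u" "sq_integrable u" and e: "\<epsilon> > 0"
  shows "(LINT w|lborel. exp (- \<epsilon> * w\<^sup>2) * (cmod (fourier u w))\<^sup>2) \<le> 2 * pi * L2_sqnorm u"
proof -
  have "complex_of_real (LINT w|lborel. exp (- \<epsilon> * w\<^sup>2) * (cmod (fourier u w))\<^sup>2)
      = (CLINT w|lborel. complex_of_real (exp (- \<epsilon> * w\<^sup>2)) * (fourier u w * cnj (fourier u w)))"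
    unfolding integral_complex_of_real[symmetric]
    by (intro Bochner_Integration.integral_cong refl) (simp only: of_real_mult complex_norm_square)
  also have "\<dots> = (CLINT z|lborel. complex_of_real (gauss_kernel \<epsilon> z) * correlation u u z)"
    by (rule gauss_damped_fourier_inner[OF u(1) u(1) e])
  finally have "cmod (complex_of_real (LINT w|lborel. exp (- \<epsilon> * w\<^sup>2) * (cmod (fourier u w))\<^sup>2))
      \<le> 2 * pi * sqrt (L2_sqnorm u * L2_sqnorm u)"
    using norm_gauss_kernel_integral_le[OF borel_measurable_correlation[OF u(2) u(2)]
        norm_correlation_le[OF u(2) u(2)] e] by simp
  then show ?thesis using L2_sqnorm_nonneg[of u] by simp
qed

lemma sq_integrable_fourier:
  assumes u: "integrable lborel u" "sq_integrable u"
  shows "sq_integrable (fourier u)"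
proof -
  have [measurable]: "fourier u \<in> borel_measurable borel" by (rule borel_measurable_fourier[OF u(1)])
  define L where "L = (LINT x|lborel. cmod (u x))"
  define e where "e n w = exp (- (1 / real (Suc n)) * w\<^sup>2)" for n w
  have e_int: "integrable lborel (\<lambda>w. e n w * (cmod (fourier u w))\<^sup>2)" for n
  proof (rule Bochner_Integration.integrable_bound)
    show "integrable lborel (\<lambda>w. L\<^sup>2 * e n w)"
      unfolding e_def using integrable_gaussian[of "1 / real (Suc n)"] by simp
    have "(cmod (fourier u w))\<^sup>2 \<le> L\<^sup>2" for w
      using norm_fourier_le[OF u(1), of w] unfolding L_def by (intro power_mono) auto
    then show "AE w in lborel. norm (e n w * (cmod (fourier u w))\<^sup>2) \<le> norm (L\<^sup>2 * e n w)"
      by (intro AE_I2) (simp add: e_def mult.commute mult_left_mono)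
  qed (simp add: e_def)
  have "(\<lambda>n. \<integral>\<^sup>+w. ennreal (e n w * (cmod (fourier u w))\<^sup>2) \<partial>lborel)
      \<longlonglongrightarrow> (\<integral>\<^sup>+w. ennreal ((cmod (fourier u w))\<^sup>2) \<partial>lborel)"
  proof (rule nn_integral_LIMSEQ)
    show "incseq (\<lambda>n w. ennreal (e n w * (cmod (fourier u w))\<^sup>2))"
      using gauss_damping_incseq unfolding incseq_def le_fun_def e_def
      by (auto intro!: ennreal_leI mult_right_mono)
    have "(\<lambda>n. e n w * (cmod (fourier u w))\<^sup>2) \<longlonglongrightarrow> 1 * (cmod (fourier u w))\<^sup>2" for w
      unfolding e_def by (intro tendsto_intros gauss_damping_tendsto_1)
    then show "(\<lambda>n. ennreal (e n w * (cmod (fourier u w))\<^sup>2)) \<longlonglongrightarrow> ennreal ((cmod (fourier u w))\<^sup>2)" for w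
      by (intro tendsto_ennrealI) simp
  qed (simp add: e_def)
  moreover have "(\<integral>\<^sup>+w. ennreal (e n w * (cmod (fourier u w))\<^sup>2) \<partial>lborel) \<le> ennreal (2 * pi * L2_sqnorm u)" for n
    using gauss_damped_fourier_sqnorm_le[OF u, of "1 / real (Suc n)"] nn_integral_eq_integral[OF e_int[of n]]
    by (simp add: e_def ennreal_leI)
  ultimately have "(\<integral>\<^sup>+w. ennreal ((cmod (fourier u w))\<^sup>2) \<partial>lborel) \<le> ennreal (2 * pi * L2_sqnorm u)"
    by (intro LIMSEQ_le_const2) auto
  then have "(\<integral>\<^sup>+w. ennreal ((cmod (fourier u w))\<^sup>2) \<partial>lborel) < \<infinity>"
    by (simp add: le_less_trans)
  then have "integrable lborel (\<lambda>w. (cmod (fourier u w))\<^sup>2)"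
    by (intro integrableI_bounded) auto
  then show ?thesis unfolding sq_integrable_def by simp
qed

text \<open>Let the Gaussian damping in \<open>gauss_damped_fourier_inner\<close> tend to \<open>1\<close> on both sides.\<close>
lemma fourier_Parseval:
  assumes u: "integrable lborel u" "sq_integrable u" and v: "integrable lborel v" "sq_integrable v"
  shows "(CLINT w|lborel. fourier u w * cnj (fourier v w)) = 2 * pi * (CLINT x|lborel. u x * cnj (v x))"
proof -
  have su: "sq_integrable (fourier u)" and sv: "sq_integrable (fourier v)"
    using sq_integrable_fourier u v by auto
  have [measurable]: "fourier u \<in> borel_measurable borel" "fourier v \<in> borel_measurable borel"
    using borel_measurable_fourier u(1) v(1) by auto
  define D where "D n w = complex_of_real (exp (- (1 / real (Suc n)) * w\<^sup>2)) * (fourier u w * cnj (fourier v w))"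
    for n w
  have lim_damped: "(\<lambda>n. CLINT w|lborel. D n w) \<longlonglongrightarrow> (CLINT w|lborel. fourier u w * cnj (fourier v w))"
  proof (rule Bochner_Integration.integral_dominated_convergence[where w = "\<lambda>w. cmod (fourier u w * cnj (fourier v w))"])
    show "integrable lborel (\<lambda>w. cmod (fourier u w * cnj (fourier v w)))"
      using integrable_mult_cnj_sq_integrable[OF su sv] by (rule integrable_norm)
    have "(\<lambda>n. D n w) \<longlonglongrightarrow> complex_of_real 1 * (fourier u w * cnj (fourier v w))" for w
      unfolding D_def by (intro tendsto_intros gauss_damping_tendsto_1)
    then show "AE w in lborel. (\<lambda>n. D n w) \<longlonglongrightarrow> fourier u w * cnj (fourier v w)" by simp
    show "AE w in lborel. norm (D n w) \<le> cmod (fourier u w * cnj (fourier v w))" for n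
      by (intro AE_I2) (simp add: D_def norm_mult mult_left_le_one_le)
  qed (simp_all add: D_def)
  have pos: "1 / real (Suc n) > 0" for n by simp
  have "(\<lambda>n. sqrt (1 / real (Suc n))) \<longlonglongrightarrow> sqrt 0"
    by (intro tendsto_intros LIMSEQ_Suc[OF lim_const_over_n])
  then have "(\<lambda>n. CLINT z|lborel. complex_of_real (gauss_kernel ((sqrt (1 / real (Suc n)))\<^sup>2) z) * correlation u v z)
      \<longlonglongrightarrow> 2 * pi * correlation u v 0"
    by (intro gauss_kernel_approx_identity[OF borel_measurable_correlation[OF u(2) v(2)]
        isCont_correlation_0[OF u(2) v(2)] norm_correlation_le[OF u(2) v(2)]]) simp_all
  then have "(\<lambda>n. CLINT w|lborel. D n w) \<longlonglongrightarrow> 2 * pi * correlation u v 0"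
    unfolding D_def gauss_damped_fourier_inner[OF u(1) v(1) pos] by simp
  from LIMSEQ_unique[OF lim_damped this] show ?thesis by (simp add: correlation_def)
qed

section \<open>The linear canonical transform on \<open>L\<^sup>1 \<inter> L\<^sup>2\<close>\<close>

definition lct_amplitude :: "real \<Rightarrow> complex" where
  "lct_amplitude b = 1 / csqrt (\<i> * 2 * complex_of_real pi * complex_of_real b)"

lemma lct_kernel_eq_cis:
  "lct_kernel (a, b, c, d) \<tau> \<xi> =
     lct_amplitude b * (cis (d / (2 * b) * \<xi>\<^sup>2) * (cis (a / (2 * b) * \<tau>\<^sup>2) * cis (- (\<xi> / b * \<tau>))))"
proof -
  have "lct_kernel (a, b, c, d) \<tau> \<xi> = lct_amplitude b * cis (a / (2 * b) * \<tau>\<^sup>2 - 1 / b * \<tau> * \<xi> + d / (2 * b) * \<xi>\<^sup>2)"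
    unfolding lct_kernel_def lct_amplitude_def cis_conv_exp by simp
  also have "a / (2 * b) * \<tau>\<^sup>2 - 1 / b * \<tau> * \<xi> + d / (2 * b) * \<xi>\<^sup>2
      = d / (2 * b) * \<xi>\<^sup>2 + (a / (2 * b) * \<tau>\<^sup>2 + - (\<xi> / b * \<tau>))"
    by (simp add: algebra_simps)
  finally show ?thesis by (simp only: cis_mult)
qed

lemma norm_lct_amplitude_sq: "b \<noteq> 0 \<Longrightarrow> (cmod (lct_amplitude b))\<^sup>2 = 1 / (2 * pi * \<bar>b\<bar>)"
  unfolding lct_amplitude_def by (simp add: norm_divide norm_mult power_divide)

lemma norm_lct_kernel: "cmod (lct_kernel (a, b, c, d) \<tau> \<xi>) = cmod (lct_amplitude b)"
  unfolding lct_kernel_eq_cis by (simp add: norm_mult)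

lemma borel_measurable_lct_kernel [measurable]:
  "(\<lambda>\<tau>. lct_kernel (a, b, c, d) \<tau> \<xi>) \<in> borel_measurable borel"
  unfolding lct_kernel_eq_cis by measurable

text \<open>The defining integral, meaningful for integrable \<open>p\<close>; \<open>is_LCT\<close> is its \<open>L\<^sup>2\<close> extension.\<close>
definition lct_integral :: "lct_param \<Rightarrow> (real \<Rightarrow> complex) \<Rightarrow> real \<Rightarrow> complex" where
  "lct_integral M p \<xi> = (CLINT \<tau>|lborel. p \<tau> * lct_kernel M \<tau> \<xi>)"

lemma lct_integral_eq_fourier:
  "lct_integral (a, b, c, d) p \<xi> =
     lct_amplitude b * cis (d / (2 * b) * \<xi>\<^sup>2) * fourier (\<lambda>\<tau>. p \<tau> * cis (a / (2 * b) * \<tau>\<^sup>2)) (\<xi> / b)"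
proof -
  have "lct_integral (a, b, c, d) p \<xi> = (CLINT \<tau>|lborel. (lct_amplitude b * cis (d / (2 * b) * \<xi>\<^sup>2)) *
      (p \<tau> * cis (a / (2 * b) * \<tau>\<^sup>2) * cis (- (\<xi> / b * \<tau>))))"
    unfolding lct_integral_def lct_kernel_eq_cis
    by (intro Bochner_Integration.integral_cong refl) (simp add: mult_ac)
  then show ?thesis unfolding fourier_def by simp
qed

lemma sq_integrable_rescale:
  assumes "sq_integrable u" "b \<noteq> 0"
  shows "sq_integrable (\<lambda>\<xi>. u (\<xi> / b))"
  unfolding sq_integrable_def
proof
  have [measurable]: "u \<in> borel_measurable borel" using assms by (simp add: sq_integrable_borel_measurable)
  show "(\<lambda>\<xi>. u (\<xi> / b)) \<in> borel_measurable lborel" by measurable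
  have "integrable lborel (\<lambda>x. (cmod (u (0 + (1 / b) * x)))\<^sup>2)"
    using lborel_integrable_real_affine_iff[of "1/b" "\<lambda>x. (cmod (u x))\<^sup>2" 0] assms
    by (simp add: sq_integrable_def)
  then show "integrable lborel (\<lambda>x. (cmod (u (x / b)))\<^sup>2)" by simp
qed

lemma integrable_mult_cis:
  assumes "integrable lborel p" "\<phi> \<in> borel_measurable borel"
  shows "integrable lborel (\<lambda>\<tau>. p \<tau> * cis (\<phi> \<tau>))"
proof (rule Bochner_Integration.integrable_bound[OF assms(1)])
  have [measurable]: "p \<in> borel_measurable borel" "\<phi> \<in> borel_measurable borel"
    using assms by (auto simp: integrable_lborel_borel_measurable)
  show "(\<lambda>\<tau>. p \<tau> * cis (\<phi> \<tau>)) \<in> borel_measurable lborel" by measurable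
qed (simp add: norm_mult)

lemma sq_integrable_mult_cis:
  assumes "sq_integrable p" "\<phi> \<in> borel_measurable borel"
  shows "sq_integrable (\<lambda>\<tau>. p \<tau> * cis (\<phi> \<tau>))"
  using sq_integrable_bounded_mult[OF assms(1), of "\<lambda>\<tau>. cis (\<phi> \<tau>)" 1] assms(2)
  by (simp add: mult.commute)

lemma sq_integrable_lct_integral:
  assumes b: "b \<noteq> 0" and p: "integrable lborel p" "sq_integrable p"
  shows "sq_integrable (lct_integral (a, b, c, d) p)"
proof -
  have "sq_integrable (\<lambda>\<xi>. fourier (\<lambda>\<tau>. p \<tau> * cis (a / (2 * b) * \<tau>\<^sup>2)) (\<xi> / b))"
    by (intro sq_integrable_rescale b sq_integrable_fourier integrable_mult_cis sq_integrable_mult_cis p)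
       measurable
  then have "sq_integrable (\<lambda>\<xi>. (lct_amplitude b * cis (d / (2 * b) * \<xi>\<^sup>2)) *
      fourier (\<lambda>\<tau>. p \<tau> * cis (a / (2 * b) * \<tau>\<^sup>2)) (\<xi> / b))"
    by (rule sq_integrable_bounded_mult[where B = "cmod (lct_amplitude b)"]) (auto simp: norm_mult)
  then show ?thesis unfolding lct_integral_eq_fourier[abs_def] by simp
qed

text \<open>The chirps \<open>cis (d \<xi>\<^sup>2 / 2b)\<close> and \<open>cis (a \<tau>\<^sup>2 / 2b)\<close> are unimodular, so Parseval's
  identity for the transform reduces to the Fourier case, the factor \<open>2 \<pi>\<close> cancelling against
  \<open>\<bar>lct_amplitude b\<bar>\<^sup>2\<close> and the rescaling \<open>\<xi> / b\<close>.\<close>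
lemma lct_Parseval:
  assumes b: "b \<noteq> 0"
    and p: "integrable lborel p" "sq_integrable p" and q: "integrable lborel q" "sq_integrable q"
  shows "(CLINT \<xi>|lborel. lct_integral (a, b, c, d) p \<xi> * cnj (lct_integral (a, b, c, d) q \<xi>))
    = (CLINT \<tau>|lborel. p \<tau> * cnj (q \<tau>))"
proof -
  define P where "P \<tau> = p \<tau> * cis (a / (2 * b) * \<tau>\<^sup>2)" for \<tau>
  define Q where "Q \<tau> = q \<tau> * cis (a / (2 * b) * \<tau>\<^sup>2)" for \<tau>
  define K where "K = lct_amplitude b * cnj (lct_amplitude b)"
  define F where "F w = fourier P w * cnj (fourier Q w)" for w
  have "lct_integral (a, b, c, d) p \<xi> * cnj (lct_integral (a, b, c, d) q \<xi>)
      = K * (cis (d / (2 * b) * \<xi>\<^sup>2) * cnj (cis (d / (2 * b) * \<xi>\<^sup>2))) * F (\<xi> / b)" for \<xi>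
    unfolding lct_integral_eq_fourier F_def P_def Q_def K_def by (simp add: mult_ac)
  then have pointwise: "lct_integral (a, b, c, d) p \<xi> * cnj (lct_integral (a, b, c, d) q \<xi>) = K * F (\<xi> / b)" for \<xi>
    by (simp add: cis_cnj cis_mult)
  have "(CLINT \<xi>|lborel. F (\<xi> / b)) = \<bar>b\<bar> *\<^sub>R (CLINT w|lborel. F w)"
    using lborel_integral_real_affine[of b "\<lambda>\<xi>. F (\<xi> / b)" 0] b by simp
  moreover have "(CLINT w|lborel. F w) = 2 * pi * (CLINT \<tau>|lborel. P \<tau> * cnj (Q \<tau>))"
    unfolding F_def P_def Q_def
    by (intro fourier_Parseval integrable_mult_cis sq_integrable_mult_cis p q) measurable
  moreover have "(CLINT \<tau>|lborel. P \<tau> * cnj (Q \<tau>)) = (CLINT \<tau>|lborel. p \<tau> * cnj (q \<tau>))"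
    unfolding P_def Q_def
    by (intro Bochner_Integration.integral_cong refl) (simp add: mult_ac cis_cnj cis_mult)
  moreover have "K = complex_of_real (1 / (2 * pi * \<bar>b\<bar>))"
    unfolding K_def complex_norm_square[symmetric] norm_lct_amplitude_sq[OF b] ..
  ultimately show ?thesis
    unfolding pointwise using b by (simp add: scaleR_conv_of_real)
qed

section \<open>Passage to the limit\<close>

lemma norm_L2_inner_diff_le:
  assumes F': "sq_integrable F'" and F: "sq_integrable F" and G': "sq_integrable G'" and G: "sq_integrable G"
  shows "cmod ((CLINT x|lborel. F' x * cnj (G' x)) - (CLINT x|lborel. F x * cnj (G x)))
    \<le> sqrt (L2_sqnorm (\<lambda>x. F' x - F x) * (2 * L2_sqnorm (\<lambda>x. G' x - G x) + 2 * L2_sqnorm G))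
      + sqrt (L2_sqnorm F * L2_sqnorm (\<lambda>x. G' x - G x))"
proof -
  have sF: "sq_integrable (\<lambda>x. F' x - F x)" and sG: "sq_integrable (\<lambda>x. G' x - G x)"
    by (intro sq_integrable_diff F F' G G')+
  have "(CLINT x|lborel. (F' x - F x) * cnj (G' x)) + (CLINT x|lborel. F x * cnj (G' x - G x))
      = (CLINT x|lborel. (F' x - F x) * cnj (G' x) + F x * cnj (G' x - G x))"
    using integrable_mult_cnj_sq_integrable[OF sF G'] integrable_mult_cnj_sq_integrable[OF F sG]
    by simp
  also have "\<dots> = (CLINT x|lborel. F' x * cnj (G' x) - F x * cnj (G x))"
    by (intro Bochner_Integration.integral_cong refl) (simp add: algebra_simps)
  also have "\<dots> = (CLINT x|lborel. F' x * cnj (G' x)) - (CLINT x|lborel. F x * cnj (G x))"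
    using integrable_mult_cnj_sq_integrable[OF F' G'] integrable_mult_cnj_sq_integrable[OF F G]
    by simp
  finally have split: "(CLINT x|lborel. F' x * cnj (G' x)) - (CLINT x|lborel. F x * cnj (G x))
      = (CLINT x|lborel. (F' x - F x) * cnj (G' x)) + (CLINT x|lborel. F x * cnj (G' x - G x))" ..
  have "L2_sqnorm G' \<le> 2 * L2_sqnorm (\<lambda>x. G' x - G x) + 2 * L2_sqnorm G"
    using L2_sqnorm_add_le[OF sG G] by simp
  then have "L2_sqnorm (\<lambda>x. F' x - F x) * L2_sqnorm G'
      \<le> L2_sqnorm (\<lambda>x. F' x - F x) * (2 * L2_sqnorm (\<lambda>x. G' x - G x) + 2 * L2_sqnorm G)"
    by (rule mult_left_mono) (rule L2_sqnorm_nonneg)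
  then have "cmod (CLINT x|lborel. (F' x - F x) * cnj (G' x))
      \<le> sqrt (L2_sqnorm (\<lambda>x. F' x - F x) * (2 * L2_sqnorm (\<lambda>x. G' x - G x) + 2 * L2_sqnorm G))"
    using Cauchy_Schwarz_L2[OF sF G'] by (simp add: real_le_rsqrt)
  moreover have "cmod (CLINT x|lborel. F x * cnj (G' x - G x)) \<le> sqrt (L2_sqnorm F * L2_sqnorm (\<lambda>x. G' x - G x))"
    using Cauchy_Schwarz_L2[OF F sG] by (simp add: real_le_rsqrt)
  ultimately show ?thesis
    unfolding split using norm_triangle_ineq[of "CLINT x|lborel. (F' x - F x) * cnj (G' x)"
      "CLINT x|lborel. F x * cnj (G' x - G x)"] by linarith
qed

lemma L2_inner_tendsto:
  assumes F: "\<And>n. sq_integrable (Fn n)" "sq_integrable F"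
    and G: "\<And>n. sq_integrable (Gn n)" "sq_integrable G"
    and lim_F: "(\<lambda>n. L2_sqnorm (\<lambda>x. Fn n x - F x)) \<longlonglongrightarrow> 0"
    and lim_G: "(\<lambda>n. L2_sqnorm (\<lambda>x. Gn n x - G x)) \<longlonglongrightarrow> 0"
  shows "(\<lambda>n. CLINT x|lborel. Fn n x * cnj (Gn n x)) \<longlonglongrightarrow> (CLINT x|lborel. F x * cnj (G x))"
proof -
  have "(\<lambda>n. sqrt (L2_sqnorm (\<lambda>x. Fn n x - F x) * (2 * L2_sqnorm (\<lambda>x. Gn n x - G x) + 2 * L2_sqnorm G))
        + sqrt (L2_sqnorm F * L2_sqnorm (\<lambda>x. Gn n x - G x)))
      \<longlonglongrightarrow> sqrt (0 * (2 * 0 + 2 * L2_sqnorm G)) + sqrt (L2_sqnorm F * 0)"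
    by (intro tendsto_intros lim_F lim_G)
  then have "(\<lambda>n. sqrt (L2_sqnorm (\<lambda>x. Fn n x - F x) * (2 * L2_sqnorm (\<lambda>x. Gn n x - G x) + 2 * L2_sqnorm G))
        + sqrt (L2_sqnorm F * L2_sqnorm (\<lambda>x. Gn n x - G x))) \<longlonglongrightarrow> 0"
    by simp
  then have "(\<lambda>n. (CLINT x|lborel. Fn n x * cnj (Gn n x)) - (CLINT x|lborel. F x * cnj (G x))) \<longlonglongrightarrow> 0"
    by (rule Lim_null_comparison[rotated]) (use norm_L2_inner_diff_le[OF F(1) F(2) G(1) G(2)] in auto)
  then show ?thesis by (simp add: LIM_zero_iff)
qed

definition truncate :: "nat \<Rightarrow> (real \<Rightarrow> complex) \<Rightarrow> real \<Rightarrow> complex" where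
  "truncate N p \<tau> = indicator {- real N..real N} \<tau> *\<^sub>R p \<tau>"

lemma truncate_integrable:
  assumes p: "sq_integrable p"
  shows integrable_truncate: "integrable lborel (truncate N p)"
    and sq_integrable_truncate: "sq_integrable (truncate N p)"
proof -
  have [measurable]: "p \<in> borel_measurable borel" using p by (rule sq_integrable_borel_measurable)
  show "integrable lborel (truncate N p)"
    unfolding truncate_def
  proof (rule Bochner_Integration.integrable_bound)
    show "integrable lborel (\<lambda>x. (cmod (p x))\<^sup>2 + indicator {- real N..real N} x :: real)"
      using p emeasure_compact_finite[OF compact_Icc[of "- real N" "real N"]]
      by (intro Bochner_Integration.integrable_add integrable_real_indicator) (auto simp: sq_integrable_def)
    have "cmod (p x) \<le> (cmod (p x))\<^sup>2 + 1" for x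
    proof -
      have "2 * cmod (p x) \<le> (cmod (p x))\<^sup>2 + 1"
        using zero_le_power2[of "cmod (p x) - 1"] by (simp add: power2_diff)
      then show ?thesis using norm_ge_zero[of "p x"] by linarith
    qed
    then show "AE x in lborel. norm (indicator {- real N..real N} x *\<^sub>R p x) \<le> norm ((cmod (p x))\<^sup>2 + indicator {- real N..real N} x :: real)"
      by (intro AE_I2) (simp add: indicator_def)
  qed simp
  show "sq_integrable (truncate N p)"
    unfolding truncate_def using sq_integrable_bounded_mult[OF p, of "\<lambda>\<tau>. complex_of_real (indicator {- real N..real N} \<tau>)" 1]
    by (simp add: scaleR_conv_of_real indicator_def)
qed

lemma lct_trunc_eq_lct_integral: "lct_trunc M h N = lct_integral M (truncate N h)"
  unfolding lct_trunc_def lct_integral_def set_lebesgue_integral_def truncate_def by (simp add: fun_eq_iff)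

lemma is_LCT_tendsto:
  assumes "is_LCT M h F" "\<And>N. sq_integrable (lct_trunc M h N)"
  shows "(\<lambda>N. L2_sqnorm (\<lambda>x. lct_trunc M h N x - F x)) \<longlonglongrightarrow> 0"
proof -
  have F: "sq_integrable F" using assms(1) by (simp add: is_LCT_def)
  have "(\<lambda>N. ennreal (L2_sqnorm (\<lambda>x. lct_trunc M h N x - F x))) \<longlonglongrightarrow> 0"
    using assms(1) unfolding is_LCT_def
    by (simp add: L2_sqnorm_eq_nn_integral[OF sq_integrable_diff[OF assms(2) F]])
  then have "(\<lambda>N. ennreal (L2_sqnorm (\<lambda>x. lct_trunc M h N x - F x))) \<longlonglongrightarrow> ennreal 0"
    by simp
  then show ?thesis by (rule tendsto_ennrealD) (auto simp: L2_sqnorm_nonneg)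
qed

section \<open>The dual window\<close>

text \<open>The paper's \<open>G\<^sup>*(\<xi> | u, t)\<close>, with \<open>\<Phi>\<close> in place of \<open>L\<^sub>A\<^sub>1\<^sup>g\<close>.\<close>
definition lct_dual_window ::
    "real \<Rightarrow> real \<Rightarrow> (real \<Rightarrow> complex) \<Rightarrow> lct_param \<Rightarrow> real \<Rightarrow> real \<Rightarrow> real \<Rightarrow> complex" where
  "lct_dual_window b d' \<Phi> A t u \<xi> = csqrt (- \<i> * 2 * complex_of_real pi * complex_of_real b) *
     exp (\<i> * complex_of_real (d' / (2 * b) * (\<xi> - u)\<^sup>2)) * cnj (\<Phi> (\<xi> - u)) *
     lct_kernel A t u * cnj (lct_kernel A t \<xi>)"

definition window_phase :: "real \<Rightarrow> real \<Rightarrow> real \<Rightarrow> real \<Rightarrow> real \<Rightarrow> real" where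
  "window_phase b d t u \<xi> = d / (2 * b) * \<xi>\<^sup>2 - d / (2 * b) * u\<^sup>2 + (u - \<xi>) * t / b"

definition window_multiplier :: "real \<Rightarrow> real \<Rightarrow> real \<Rightarrow> real \<Rightarrow> real \<Rightarrow> real \<Rightarrow> complex" where
  "window_multiplier b d d' t u \<xi> = cnj (csqrt (- \<i> * 2 * complex_of_real pi * complex_of_real b)) *
     cis (- (d' / (2 * b) * (\<xi> - u)\<^sup>2)) *
     (lct_amplitude b * cnj (lct_amplitude b) * cis (window_phase b d t u \<xi>))"

lemma cnj_lct_kernel_mult_lct_kernel:
  "cnj (lct_kernel (a, b, c, d) t u) * lct_kernel (a, b, c, d) t \<xi>
     = lct_amplitude b * cnj (lct_amplitude b) * cis (window_phase b d t u \<xi>)"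
proof -
  have "window_phase b d t u \<xi> = - (d / (2 * b) * u\<^sup>2) + (- (a / (2 * b) * t\<^sup>2) + (u / b * t +
      (d / (2 * b) * \<xi>\<^sup>2 + (a / (2 * b) * t\<^sup>2 + - (\<xi> / b * t)))))"
    unfolding window_phase_def by (simp add: algebra_simps add_divide_distrib diff_divide_distrib)
  then have "cis (window_phase b d t u \<xi>) = cis (- (d / (2 * b) * u\<^sup>2)) * (cis (- (a / (2 * b) * t\<^sup>2)) *
      (cis (u / b * t) * (cis (d / (2 * b) * \<xi>\<^sup>2) * (cis (a / (2 * b) * t\<^sup>2) * cis (- (\<xi> / b * t))))))"
    by (simp only: cis_mult)
  then show ?thesis unfolding lct_kernel_eq_cis complex_cnj_mult cis_cnj by (simp add: mult_ac)
qed

lemma cnj_csqrt_mult_lct_amplitude: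
  assumes "b \<noteq> 0"
  shows "cnj (csqrt (- \<i> * 2 * complex_of_real pi * complex_of_real b)) * lct_amplitude b = 1"
proof -
  have "- \<i> * 2 * complex_of_real pi * complex_of_real b \<notin> \<real>\<^sub>\<le>\<^sub>0"
    using assms by (auto simp: complex_nonpos_Reals_iff)
  then have "cnj (csqrt (- \<i> * 2 * complex_of_real pi * complex_of_real b))
      = csqrt (\<i> * 2 * complex_of_real pi * complex_of_real b)"
    by (simp add: cnj_csqrt)
  moreover have "csqrt (\<i> * 2 * complex_of_real pi * complex_of_real b) \<noteq> 0" using assms by simp
  ultimately show ?thesis unfolding lct_amplitude_def by simp
qed

lemma cnj_lct_dual_window:
  "cnj (lct_dual_window b d' \<Phi> (a, b, c, d) t u \<xi>) = window_multiplier b d d' t u \<xi> * \<Phi> (\<xi> - u)"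
proof -
  have "cnj (lct_dual_window b d' \<Phi> (a, b, c, d) t u \<xi>) =
      cnj (csqrt (- \<i> * 2 * complex_of_real pi * complex_of_real b)) * cis (- (d' / (2 * b) * (\<xi> - u)\<^sup>2)) *
      \<Phi> (\<xi> - u) * (cnj (lct_kernel (a, b, c, d) t u) * lct_kernel (a, b, c, d) t \<xi>)"
    unfolding lct_dual_window_def by (simp add: exp_cnj cis_conv_exp mult_ac)
  then show ?thesis
    unfolding cnj_lct_kernel_mult_lct_kernel window_multiplier_def by (simp add: mult_ac)
qed

lemma norm_window_multiplier:
  assumes "b \<noteq> 0"
  shows "cmod (window_multiplier b d d' t u \<xi>) = sqrt (2 * pi * \<bar>b\<bar>) / (2 * pi * \<bar>b\<bar>)"
proof -
  have "cmod (lct_amplitude b * cnj (lct_amplitude b)) = 1 / (2 * pi * \<bar>b\<bar>)"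
    using norm_lct_amplitude_sq[OF assms] by (simp add: norm_mult power2_eq_square)
  then show ?thesis unfolding window_multiplier_def by (simp add: norm_mult abs_mult)
qed

lemma borel_measurable_window_multiplier [measurable]:
  "window_multiplier b d d' t u \<in> borel_measurable borel"
  unfolding window_multiplier_def window_phase_def by measurable

text \<open>Completing the square in the phase of \<open>K\<^sub>A(\<tau>, \<xi>)\<close> times the conjugate of
  \<open>K\<^sub>A(\<tau>, u)\<close> leaves the Fourier transform of the window at \<open>(\<xi> - u) / b\<close>.\<close>
lemma lct_integral_shifted_window:
  "lct_integral (a, b, c, d) (\<lambda>\<tau>. w (\<tau> - t) * cnj (lct_kernel (a, b, c, d) \<tau> u)) \<xi>
     = lct_amplitude b * cnj (lct_amplitude b) * cis (window_phase b d t u \<xi>) * fourier w ((\<xi> - u) / b)"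
proof -
  define K where "K = lct_amplitude b * cnj (lct_amplitude b)"
  have "lct_integral (a, b, c, d) (\<lambda>\<tau>. w (\<tau> - t) * cnj (lct_kernel (a, b, c, d) \<tau> u)) \<xi>
      = (CLINT \<tau>|lborel. w (\<tau> - t) * (K * cis (window_phase b d \<tau> u \<xi>)))"
    unfolding lct_integral_def K_def
    by (intro Bochner_Integration.integral_cong refl)
       (simp only: mult.assoc cnj_lct_kernel_mult_lct_kernel)
  also have "\<dots> = (CLINT s|lborel. w s * (K * cis (window_phase b d (s + t) u \<xi>)))"
    using lborel_integral_shift[of "\<lambda>\<tau>. w (\<tau> - t) * (K * cis (window_phase b d \<tau> u \<xi>))" t] by simp
  also have "\<dots> = (CLINT s|lborel. K * cis (window_phase b d t u \<xi>) * (w s * cis (- ((\<xi> - u) / b * s))))"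
  proof (intro Bochner_Integration.integral_cong refl)
    fix s
    have "window_phase b d (s + t) u \<xi> = window_phase b d t u \<xi> + - ((\<xi> - u) / b * s)"
      unfolding window_phase_def by (simp add: algebra_simps add_divide_distrib diff_divide_distrib)
    then have "cis (window_phase b d (s + t) u \<xi>) = cis (window_phase b d t u \<xi>) * cis (- ((\<xi> - u) / b * s))"
      by (simp only: cis_mult)
    then show "w s * (K * cis (window_phase b d (s + t) u \<xi>))
        = K * cis (window_phase b d t u \<xi>) * (w s * cis (- ((\<xi> - u) / b * s)))"
      by (simp add: mult_ac)
  qed
  finally show ?thesis unfolding fourier_def K_def by simp
qed

lemma cnj_lct_dual_window_lct_integral:
  assumes "b \<noteq> 0"
  shows "cnj (lct_dual_window b d' (lct_integral (0, b, - 1 / b, d') w) (a, b, c, d) t u \<xi>)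
     = lct_amplitude b * cnj (lct_amplitude b) * cis (window_phase b d t u \<xi>) * fourier w ((\<xi> - u) / b)"
proof -
  have "cis (- (d' / (2 * b) * (\<xi> - u)\<^sup>2)) * cis (d' / (2 * b) * (\<xi> - u)\<^sup>2) = 1"
    by (simp add: cis_mult)
  then show ?thesis
    unfolding cnj_lct_dual_window window_multiplier_def lct_integral_eq_fourier
    using cnj_csqrt_mult_lct_amplitude[OF assms] by (simp add: mult_ac)
qed

lemma lct_integral_shifted_window_eq_dual_window:
  assumes "b \<noteq> 0"
  shows "lct_integral (a, b, c, d) (\<lambda>\<tau>. w (\<tau> - t) * cnj (lct_kernel (a, b, c, d) \<tau> u))
     = (\<lambda>\<xi>. cnj (lct_dual_window b d' (lct_integral (0, b, - 1 / b, d') w) (a, b, c, d) t u \<xi>))"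
  by (rule ext) (simp only: lct_integral_shifted_window cnj_lct_dual_window_lct_integral[OF assms])

lemma sq_integrable_cnj_lct_dual_window:
  assumes "b \<noteq> 0" "sq_integrable \<Phi>"
  shows "sq_integrable (\<lambda>\<xi>. cnj (lct_dual_window b d' \<Phi> (a, b, c, d) t u \<xi>))"
  unfolding cnj_lct_dual_window
  by (rule sq_integrable_bounded_mult[OF sq_integrable_shift'[OF assms(2)],
        where B = "sqrt (2 * pi * \<bar>b\<bar>) / (2 * pi * \<bar>b\<bar>)"])
     (simp_all add: norm_window_multiplier[OF assms(1)])

lemma L2_sqnorm_cnj_lct_dual_window_diff:
  assumes "b \<noteq> 0"
  shows "L2_sqnorm (\<lambda>\<xi>. cnj (lct_dual_window b d' \<Phi> (a, b, c, d) t u \<xi>)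
                         - cnj (lct_dual_window b d' \<Psi> (a, b, c, d) t u \<xi>))
    = (sqrt (2 * pi * \<bar>b\<bar>) / (2 * pi * \<bar>b\<bar>))\<^sup>2 * L2_sqnorm (\<lambda>x. \<Phi> x - \<Psi> x)"
proof -
  have "L2_sqnorm (\<lambda>\<xi>. cnj (lct_dual_window b d' \<Phi> (a, b, c, d) t u \<xi>)
                      - cnj (lct_dual_window b d' \<Psi> (a, b, c, d) t u \<xi>))
      = L2_sqnorm (\<lambda>\<xi>. window_multiplier b d d' t u \<xi> * (\<Phi> (\<xi> - u) - \<Psi> (\<xi> - u)))"
    unfolding cnj_lct_dual_window by (simp add: right_diff_distrib)
  also have "\<dots> = (sqrt (2 * pi * \<bar>b\<bar>) / (2 * pi * \<bar>b\<bar>))\<^sup>2 * L2_sqnorm (\<lambda>x. \<Phi> (x - u) - \<Psi> (x - u))"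
    by (rule L2_sqnorm_mult_const_norm) (rule norm_window_multiplier[OF assms])
  finally show ?thesis using L2_sqnorm_shift'[of "\<lambda>x. \<Phi> x - \<Psi> x" u] by simp
qed

lemma lct_truncate_L2_tendsto:
  assumes "b \<noteq> 0" "sq_integrable f" "is_LCT (a, b, c, d) f F"
  shows sq_integrable_lct_truncate: "sq_integrable (lct_integral (a, b, c, d) (truncate N f))"
    and lct_truncate_tendsto: "(\<lambda>N. L2_sqnorm (\<lambda>x. lct_integral (a, b, c, d) (truncate N f) x - F x)) \<longlonglongrightarrow> 0"
proof -
  show sq: "sq_integrable (lct_integral (a, b, c, d) (truncate N f))" for N
    using assms(1,2) by (intro sq_integrable_lct_integral integrable_truncate sq_integrable_truncate)
  show "(\<lambda>N. L2_sqnorm (\<lambda>x. lct_integral (a, b, c, d) (truncate N f) x - F x)) \<longlonglongrightarrow> 0"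
    using is_LCT_tendsto[OF assms(3)] sq unfolding lct_trunc_eq_lct_integral by blast
qed

lemma truncate_window:
  assumes g: "sq_integrable g" and m: "m \<in> borel_measurable borel" "\<And>\<tau>. cmod (m \<tau>) \<le> B"
  shows integrable_truncate_window: "integrable lborel (\<lambda>\<tau>. truncate N g (\<tau> - t) * m \<tau>)"
    and sq_integrable_truncate_window: "sq_integrable (\<lambda>\<tau>. truncate N g (\<tau> - t) * m \<tau>)"
proof -
  have [measurable]: "g \<in> borel_measurable borel" "m \<in> borel_measurable borel"
    using g m(1) by (auto intro: sq_integrable_borel_measurable)
  have shifted: "integrable lborel (\<lambda>\<tau>. truncate N g (\<tau> - t))"
    using integrable_truncate[OF g] lborel_integrable_shift_iff[of "truncate N g" "- t"] by simp
  show "integrable lborel (\<lambda>\<tau>. truncate N g (\<tau> - t) * m \<tau>)"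
  proof (rule Bochner_Integration.integrable_bound[where f = "\<lambda>\<tau>. B *\<^sub>R truncate N g (\<tau> - t)"])
    show "integrable lborel (\<lambda>\<tau>. B *\<^sub>R truncate N g (\<tau> - t))" using shifted by simp
    have "B \<ge> 0" using m(2) norm_ge_zero order_trans by blast
    then show "AE \<tau> in lborel. norm (truncate N g (\<tau> - t) * m \<tau>) \<le> norm (B *\<^sub>R truncate N g (\<tau> - t))"
      using m(2) by (intro AE_I2) (simp add: norm_mult mult.commute mult_right_mono)
    show "(\<lambda>\<tau>. truncate N g (\<tau> - t) * m \<tau>) \<in> borel_measurable lborel"
      unfolding truncate_def by measurable
  qed
  show "sq_integrable (\<lambda>\<tau>. truncate N g (\<tau> - t) * m \<tau>)"
    using sq_integrable_bounded_mult[OF sq_integrable_shift'[OF sq_integrable_truncate[OF g]] m]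
    by (simp add: mult.commute)
qed

lemma L2_inner_truncate_window_tendsto:
  assumes f: "sq_integrable f" and h: "sq_integrable (\<lambda>\<tau>. g (\<tau> - t) * m \<tau>)"
    and [measurable]: "g \<in> borel_measurable borel" "m \<in> borel_measurable borel"
  shows "(\<lambda>N. CLINT \<tau>|lborel. truncate N f \<tau> * cnj (truncate N g (\<tau> - t) * m \<tau>))
    \<longlonglongrightarrow> (CLINT \<tau>|lborel. f \<tau> * cnj (g (\<tau> - t) * m \<tau>))"
proof (rule Bochner_Integration.integral_dominated_convergence
    [where w = "\<lambda>\<tau>. cmod (f \<tau>) * cmod (g (\<tau> - t) * m \<tau>)"])
  have [measurable]: "f \<in> borel_measurable borel" using f by (rule sq_integrable_borel_measurable)
  show "(\<lambda>\<tau>. f \<tau> * cnj (g (\<tau> - t) * m \<tau>)) \<in> borel_measurable lborel" by measurable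
  show "(\<lambda>\<tau>. truncate N f \<tau> * cnj (truncate N g (\<tau> - t) * m \<tau>)) \<in> borel_measurable lborel" for N
    unfolding truncate_def by measurable
  show "integrable lborel (\<lambda>\<tau>. cmod (f \<tau>) * cmod (g (\<tau> - t) * m \<tau>))"
    by (rule integrable_norm_mult_sq_integrable[OF f h])
  show "AE \<tau> in lborel. norm (truncate N f \<tau> * cnj (truncate N g (\<tau> - t) * m \<tau>))
      \<le> cmod (f \<tau>) * cmod (g (\<tau> - t) * m \<tau>)" for N
    by (intro AE_I2) (simp add: truncate_def norm_mult indicator_def)
  have "\<forall>\<^sub>F N in sequentially. truncate N f \<tau> * cnj (truncate N g (\<tau> - t) * m \<tau>)
      = f \<tau> * cnj (g (\<tau> - t) * m \<tau>)" for \<tau>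
  proof -
    obtain M :: nat where M: "\<bar>\<tau>\<bar> + \<bar>t\<bar> \<le> real M" using real_arch_simple by blast
    have "truncate N f \<tau> * cnj (truncate N g (\<tau> - t) * m \<tau>) = f \<tau> * cnj (g (\<tau> - t) * m \<tau>)"
      if "M \<le> N" for N
    proof -
      have "\<tau> \<in> {- real N..real N}" "\<tau> - t \<in> {- real N..real N}"
        using M that by auto
      then show ?thesis by (simp add: truncate_def)
    qed
    then show ?thesis unfolding eventually_sequentially by blast
  qed
  then show "AE \<tau> in lborel. (\<lambda>N. truncate N f \<tau> * cnj (truncate N g (\<tau> - t) * m \<tau>))
      \<longlonglongrightarrow> f \<tau> * cnj (g (\<tau> - t) * m \<tau>)"
    by (intro AE_I2) (rule tendsto_eventually)
qed

lemma truncated_window_Parseval: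
  assumes b: "b \<noteq> 0" and f: "sq_integrable f" and g: "sq_integrable g"
  shows "(CLINT \<tau>|lborel. truncate N f \<tau> * cnj (truncate N g (\<tau> - t) * cnj (lct_kernel (a, b, c, d) \<tau> u)))
    = (CLINT \<xi>|lborel. lct_integral (a, b, c, d) (truncate N f) \<xi> *
         cnj (cnj (lct_dual_window b d' (lct_integral (0, b, - 1 / b, d') (truncate N g)) (a, b, c, d) t u \<xi>)))"
proof -
  have m: "(\<lambda>\<tau>. cnj (lct_kernel (a, b, c, d) \<tau> u)) \<in> borel_measurable borel"
    "\<And>\<tau>. cmod (cnj (lct_kernel (a, b, c, d) \<tau> u)) \<le> cmod (lct_amplitude b)"
    by (simp_all add: norm_lct_kernel)
  have "lct_integral (a, b, c, d) (\<lambda>\<tau>. truncate N g (\<tau> - t) * cnj (lct_kernel (a, b, c, d) \<tau> u)) \<xi>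
      = cnj (lct_dual_window b d' (lct_integral (0, b, - 1 / b, d') (truncate N g)) (a, b, c, d) t u \<xi>)" for \<xi>
    by (rule fun_cong[OF lct_integral_shifted_window_eq_dual_window[OF b, where w = "truncate N g"]])
  from this[symmetric] show ?thesis
    by (simp only:) (rule lct_Parseval[OF b integrable_truncate[OF f] sq_integrable_truncate[OF f]
          truncate_window[OF g m], symmetric])
qed

lemma cnj_lct_dual_window_truncate_tendsto:
  assumes "b \<noteq> 0" "sq_integrable g" "is_LCT (0, b, - 1 / b, d') g G"
  shows "(\<lambda>N. L2_sqnorm (\<lambda>\<xi>. cnj (lct_dual_window b d' (lct_integral (0, b, - 1 / b, d') (truncate N g)) (a, b, c, d) t u \<xi>)
                           - cnj (lct_dual_window b d' G (a, b, c, d) t u \<xi>))) \<longlonglongrightarrow> 0"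
  unfolding L2_sqnorm_cnj_lct_dual_window_diff[OF assms(1)]
  by (rule tendsto_mult_right_zero[OF lct_truncate_tendsto[OF assms]])

theorem lemma1:
  fixes a b c d d' :: real and f g LAf LA1g :: "real \<Rightarrow> complex"
  assumes "a * d - b * c = 1" and "b \<noteq> 0"
    and "sq_integrable f" and "sq_integrable g"
    and "is_LCT (a, b, c, d) f LAf"
    and "is_LCT (0, b, - 1 / b, d') g LA1g"
  shows "\<forall>t u. stlct (a, b, c, d) g f t u =
    (LINT \<xi>|lborel. LAf \<xi> *
       (csqrt (- \<i> * 2 * complex_of_real pi * complex_of_real b) *
        exp (\<i> * complex_of_real (d' / (2 * b) * (\<xi> - u)\<^sup>2)) *
        cnj (LA1g (\<xi> - u)) *
        lct_kernel (a, b, c, d) t u * cnj (lct_kernel (a, b, c, d) t \<xi>)))"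
proof (intro allI)
  fix t u :: real
  note b = \<open>b \<noteq> 0\<close> and f = \<open>sq_integrable f\<close> and g = \<open>sq_integrable g\<close>
  define m where "m \<tau> = cnj (lct_kernel (a, b, c, d) \<tau> u)" for \<tau>
  define W where "W \<Phi> \<xi> = cnj (lct_dual_window b d' \<Phi> (a, b, c, d) t u \<xi>)" for \<Phi> \<xi>
  have [measurable]: "g \<in> borel_measurable borel" "m \<in> borel_measurable borel"
    unfolding m_def using g by (simp_all add: sq_integrable_borel_measurable)
  have "sq_integrable (\<lambda>\<tau>. g (\<tau> - t) * m \<tau>)"
    using sq_integrable_bounded_mult[OF sq_integrable_shift'[OF g], of m "cmod (lct_amplitude b)" t]
    by (simp add: m_def norm_lct_kernel mult.commute)
  then have lim_window: "(\<lambda>N. CLINT \<tau>|lborel. truncate N f \<tau> * cnj (truncate N g (\<tau> - t) * m \<tau>))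
      \<longlonglongrightarrow> (CLINT \<tau>|lborel. f \<tau> * cnj (g (\<tau> - t) * m \<tau>))"
    by (intro L2_inner_truncate_window_tendsto f) simp_all
  have "sq_integrable LAf" "sq_integrable LA1g" using assms(5,6) by (simp_all add: is_LCT_def)
  then have lim_lct: "(\<lambda>N. CLINT \<xi>|lborel. lct_integral (a, b, c, d) (truncate N f) \<xi>
        * cnj (W (lct_integral (0, b, - 1 / b, d') (truncate N g)) \<xi>))
      \<longlonglongrightarrow> (CLINT \<xi>|lborel. LAf \<xi> * cnj (W LA1g \<xi>))"
    unfolding W_def
    by (intro L2_inner_tendsto sq_integrable_lct_truncate[OF b f assms(5)]
          sq_integrable_cnj_lct_dual_window[OF b sq_integrable_lct_truncate[OF b g assms(6)]]
          sq_integrable_cnj_lct_dual_window[OF b] lct_truncate_tendsto[OF b f assms(5)]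
          cnj_lct_dual_window_truncate_tendsto[OF b g assms(6)])
  have "(CLINT \<tau>|lborel. truncate N f \<tau> * cnj (truncate N g (\<tau> - t) * m \<tau>))
      = (CLINT \<xi>|lborel. lct_integral (a, b, c, d) (truncate N f) \<xi>
        * cnj (W (lct_integral (0, b, - 1 / b, d') (truncate N g)) \<xi>))" for N
    unfolding m_def W_def by (rule truncated_window_Parseval[OF b f g])
  from LIMSEQ_unique[OF lim_window[unfolded this] lim_lct]
  show "stlct (a, b, c, d) g f t u = (LINT \<xi>|lborel. LAf \<xi> *
       (csqrt (- \<i> * 2 * complex_of_real pi * complex_of_real b) *
        exp (\<i> * complex_of_real (d' / (2 * b) * (\<xi> - u)\<^sup>2)) *
        cnj (LA1g (\<xi> - u)) *
        lct_kernel (a, b, c, d) t u * cnj (lct_kernel (a, b, c, d) t \<xi>)))"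
    unfolding stlct_def W_def m_def lct_dual_window_def by (simp add: mult.assoc)
qed

end
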